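(* Let $n\ge2$ and let $\vec v_1,\dots,\vec v_T\in[0,1]^n$ be chosen in advance by an adversary. Run Generalized FTPL over learner actions $\mathcal S_{s,m}$ with payoff $f(\vec\theta,\vec v)=\mathrm{Rev}(\vec\theta,\vec v)$, translation matrix $\Gamma^{\mathrm{SL}}$, accuracy $\epsilon=1/\sqrt T$, and $D$ uniform on $[0,1/\eta]$ with $\eta=\sqrt{(1/m)/((1+2\epsilon)T(m+1))}$. Then the auctions $\vec\theta_1,\dots,\vec\theta_T$ played satisfy \[ \mathbb E\Big[\max_{\vec\theta\in\mathcal S_{s,m}}\sum_{t=1}^T\mathrm{Rev}(\vec\theta,\vec v_t)-\sum_{t=1}^T\mathrm{Rev}(\vec\theta_t,\vec v_t)\Big]\le O(nm^2\sqrt T). \]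
   Context: $s$-level auctions: $\vec\theta$ specifies for each bidder $i$ thresholds $0\le\theta^i_0<\dots<\theta^i_{s-1}\le1$; $b_i(v_i)$ is the largest $b$ with $\theta^i_b\le v_i$ (or $-1$ if none); if all levels are $-1$ the item is unallocated, otherwise it goes to the bidder with the largest level (ties to smaller index), who pays the minimum bid with which he would still have won; $\mathrm{Rev}(\vec\theta,\vec v)\in[0,1]$ is this payment. $\mathcal S_{s,m}$: such auctions with thresholds in $\{0,1/m,\dots,1\}$. With $\vec v^{i,\ell}=\vec e_i+(\ell/m)\vec e_n$ ($1\le i\le n-1$, $0\le\ell\le m$) and $V=\{\vec v^{i,\ell}\}\cup\{\vec e_n\}$, $\Gamma^{\mathrm{SL}}_{\vec\theta,\vec v}=\mathrm{Rev}(\vec\theta,\vec v)$ for $\vec v\in V$. Generalized FTPL with $(\Gamma,D,\epsilon)$: draw $\alpha_1,\dots,\alpha_N$ i.i.d. from $D$ once; at round $t$ play any $x_t$ with $\sum_{\tau<t}f(x_t,\vec v_\tau)+\vec\alpha\cdot\Gamma_{x_t}\ge\sum_{\tau<t}f(x,\vec v_\tau)+\vec\alpha\cdot\Gamma_x-\epsilon$ for all learner actions $x$. *)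

theory Defs
  imports "HOL-Probability.Probability"
begin

text \<open>Bidders are indexed 0..n-1 (paper: 1..n); levels 0..s-1.
  An auction is \<theta> :: nat \<Rightarrow> nat \<Rightarrow> real, \<theta> i b = threshold of bidder i at level b.
  Valuation profiles are v :: nat \<Rightarrow> real (only indices < n matter).\<close>

definition grid :: "nat \<Rightarrow> real set" where
  "grid m = (\<lambda>k. real k / real m) ` {0..m}"

text \<open>The class S_{s,m} (extensional: zero outside the relevant indices, so it is finite).\<close>
definition S_sm :: "nat \<Rightarrow> nat \<Rightarrow> nat \<Rightarrow> (nat \<Rightarrow> nat \<Rightarrow> real) set" where
  "S_sm n s m = {\<theta>. (\<forall>i<n. \<forall>b<s. \<theta> i b \<in> grid m)
                  \<and> (\<forall>i<n. \<forall>b. Suc b < s \<longrightarrow> \<theta> i b < \<theta> i (Suc b))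
                  \<and> (\<forall>i b. (n \<le> i \<or> s \<le> b) \<longrightarrow> \<theta> i b = 0)}"

definition level :: "nat \<Rightarrow> (nat \<Rightarrow> nat \<Rightarrow> real) \<Rightarrow> nat \<Rightarrow> real \<Rightarrow> int" where
  "level s \<theta> i x = (if \<exists>b<s. \<theta> i b \<le> x then int (Max {b. b < s \<and> \<theta> i b \<le> x}) else -1)"

definition winner :: "nat \<Rightarrow> nat \<Rightarrow> (nat \<Rightarrow> nat \<Rightarrow> real) \<Rightarrow> (nat \<Rightarrow> real) \<Rightarrow> nat option" where
  "winner n s \<theta> v = (if \<forall>i<n. level s \<theta> i (v i) = -1 then None
     else Some (LEAST i. i < n \<and> (\<forall>j<n. level s \<theta> j (v j) \<le> level s \<theta> i (v i))))"

definition Rev :: "nat \<Rightarrow> nat \<Rightarrow> (nat \<Rightarrow> nat \<Rightarrow> real) \<Rightarrow> (nat \<Rightarrow> real) \<Rightarrow> real" where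
  "Rev n s \<theta> v = (case winner n s \<theta> v of None \<Rightarrow> 0
     | Some i \<Rightarrow> Inf {b \<in> {0..1}. winner n s \<theta> (v(i := b)) = Some i})"

definition unitvec :: "nat \<Rightarrow> nat \<Rightarrow> real" where
  "unitvec i = (\<lambda>j. if j = i then 1 else 0)"

text \<open>The set V indexing the columns of \<Gamma>^SL: v^{i,l} = e_i + (l/m) e_n (i \<le> n-1), and e_n.\<close>
definition VSL :: "nat \<Rightarrow> nat \<Rightarrow> (nat \<Rightarrow> real) set" where
  "VSL n m = {(\<lambda>j. unitvec i j + (real l / real m) * unitvec (n - 1) j) | i l. i < n - 1 \<and> l \<le> m}
             \<union> {unitvec (n - 1)}"

text \<open>\<alpha> \<cdot> \<Gamma>^SL_\<theta>, with \<alpha> indexed by the elements of V.\<close>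
definition perturb :: "nat \<Rightarrow> nat \<Rightarrow> nat \<Rightarrow> ((nat \<Rightarrow> real) \<Rightarrow> real) \<Rightarrow> (nat \<Rightarrow> nat \<Rightarrow> real) \<Rightarrow> real" where
  "perturb n s m \<alpha> \<theta> = (\<Sum>w\<in>VSL n m. \<alpha> w * Rev n s \<theta> w)"

definition ftpl_eps :: "nat \<Rightarrow> real" where
  "ftpl_eps T = 1 / sqrt (real T)"

definition ftpl_eta :: "nat \<Rightarrow> nat \<Rightarrow> real" where
  "ftpl_eta m T = sqrt ((1 / real m) / ((1 + 2 * ftpl_eps T) * real T * real (m + 1)))"

definition ftpl_D :: "nat \<Rightarrow> nat \<Rightarrow> nat \<Rightarrow> ((nat \<Rightarrow> real) \<Rightarrow> real) measure" where
  "ftpl_D n m T = PiM (VSL n m) (\<lambda>_. uniform_measure lborel {0 .. 1 / ftpl_eta m T})"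

definition ftpl_play :: "nat \<Rightarrow> nat \<Rightarrow> nat \<Rightarrow> nat \<Rightarrow> (nat \<Rightarrow> nat \<Rightarrow> real)
    \<Rightarrow> (((nat \<Rightarrow> real) \<Rightarrow> real) \<Rightarrow> nat \<Rightarrow> (nat \<Rightarrow> nat \<Rightarrow> real)) \<Rightarrow> bool" where
  "ftpl_play n s m T v play =
    (\<forall>\<alpha>\<in>space (ftpl_D n m T). \<forall>t\<in>{1..T}. play \<alpha> t \<in> S_sm n s m \<and>
       (\<forall>\<theta>\<in>S_sm n s m.
          (\<Sum>\<tau>\<in>{1..<t}. Rev n s (play \<alpha> t) (v \<tau>)) + perturb n s m \<alpha> (play \<alpha> t)
          \<ge> (\<Sum>\<tau>\<in>{1..<t}. Rev n s \<theta> (v \<tau>)) + perturb n s m \<alpha> \<theta> - ftpl_eps T))"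

definition regret :: "nat \<Rightarrow> nat \<Rightarrow> nat \<Rightarrow> nat \<Rightarrow> (nat \<Rightarrow> nat \<Rightarrow> real)
    \<Rightarrow> (nat \<Rightarrow> nat \<Rightarrow> nat \<Rightarrow> real) \<Rightarrow> real" where
  "regret n s m T v plays =
    Max ((\<lambda>\<theta>. \<Sum>t=1..T. Rev n s \<theta> (v t)) ` S_sm n s m) - (\<Sum>t=1..T. Rev n s (plays t) (v t))"

end

theory Submission
  imports Defs
begin

text \<open>
  By the be-the-leader argument, the regret of Generalized FTPL is at most the total movement
  \<open>\<Sum>\<^sub>t (Rev \<theta>\<^sub>t\<^sub>+\<^sub>1 v\<^sub>t - Rev \<theta>\<^sub>t v\<^sub>t)\<close> of the played auctions, plus the range \<open>|V|/\<eta>\<close> of the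
  perturbation and the oracle error \<open>T\<epsilon>\<close>. The matrix \<open>\<Gamma>\<^sup>S\<^sup>L\<close> is implementable: its columns, the
  revenues on \<open>e\<^sub>n\<close> and on \<open>e\<^sub>i + (l/m) e\<^sub>n\<close>, determine every threshold that can influence the
  outcome, so auctions with equal columns earn the same revenue on every valuation profile. Hence
  the revenue moves between two rounds only if some column crosses a grid value \<open>k/m\<close>. With all
  perturbations but \<open>\<alpha>\<^sub>w\<close> fixed, the objectives move with \<open>\<alpha>\<^sub>w\<close> at slopes on the \<open>1/m\<close>-grid, so
  such a crossing happens only for \<open>\<alpha>\<^sub>w\<close> in a window of width \<open>m (2 + 2\<epsilon>)\<close>, i.e. with
  probability at most \<open>2 m (2 + 2\<epsilon>) \<eta>\<close>. Summing over \<open>t\<close>, \<open>w\<close>, \<open>k\<close> and inserting \<open>\<eta>\<close> gives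
  \<open>O(n m\<^sup>2 \<surd>T)\<close>.
\<close>

section \<open>Auctions with thresholds on a grid\<close>

lemma grid_subset_unit: "grid m \<subseteq> {0..1}"
  unfolding grid_def by (auto simp: divide_le_eq_1)

lemma zero_in_grid: "0 \<in> grid m"
  unfolding grid_def by force

lemma finite_grid: "finite (grid m)"
  unfolding grid_def by simp

lemma grid_less_imp_le_minus:
  assumes "x \<in> grid m" and "1 \<le> m" and "x < real k / real m"
  shows "x \<le> real k / real m - 1 / real m"
proof -
  obtain j where j: "x = real j / real m" using assms(1) unfolding grid_def by blast
  with assms have "j < k" by (simp add: divide_less_cancel)
  then have "real j \<le> real k - 1" by linarith
  then have "real j / real m \<le> (real k - 1) / real m" using assms(2) by (simp add: divide_right_mono)
  then show ?thesis using j by (simp add: diff_divide_distrib)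
qed

lemma S_sm_grid: "\<theta> \<in> S_sm n s m \<Longrightarrow> i < n \<Longrightarrow> b < s \<Longrightarrow> \<theta> i b \<in> grid m"
  unfolding S_sm_def by auto

lemma S_sm_bounds:
  assumes "\<theta> \<in> S_sm n s m" "i < n" "b < s"
  shows "0 \<le> \<theta> i b \<and> \<theta> i b \<le> 1"
  using subsetD[OF grid_subset_unit S_sm_grid[OF assms]] by simp

lemma S_sm_zero: "\<theta> \<in> S_sm n s m \<Longrightarrow> n \<le> i \<or> s \<le> b \<Longrightarrow> \<theta> i b = 0"
  unfolding S_sm_def by auto

lemma S_sm_strict_mono:
  assumes "\<theta> \<in> S_sm n s m" "i < n" "b < b'" "b' < s"
  shows "\<theta> i b < \<theta> i b'"
  using assms(3,4)
proof (induction b' rule: less_induct)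
  case (less b')
  then obtain c where c: "b' = Suc c" "b \<le> c" by (cases b') auto
  have "\<theta> i c < \<theta> i b'" using assms(1,2) less.prems(2) c(1) unfolding S_sm_def by auto
  moreover have "\<theta> i b \<le> \<theta> i c"
    using less.IH[of c] c less.prems(2) by (cases "b = c") auto
  ultimately show ?case by simp
qed

lemma S_sm_mono:
  "\<theta> \<in> S_sm n s m \<Longrightarrow> i < n \<Longrightarrow> b \<le> b' \<Longrightarrow> b' < s \<Longrightarrow> \<theta> i b \<le> \<theta> i b'"
  using S_sm_strict_mono[of \<theta> n s m i b b'] by (cases "b = b'") auto

lemma S_sm_inj:
  assumes "\<theta> \<in> S_sm n s m" "i < n" "a < s" "b < s" "\<theta> i a = \<theta> i b"
  shows "a = b"
  using S_sm_strict_mono[OF assms(1,2), of a b] S_sm_strict_mono[OF assms(1,2), of b a] assms(3-5)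
  by (cases a b rule: linorder_cases) auto

lemma finite_S_sm: "finite (S_sm n s m)"
proof -
  let ?ext = "\<lambda>g::nat \<times> nat \<Rightarrow> real. \<lambda>i b. if i < n \<and> b < s then g (i, b) else 0"
  have "S_sm n s m \<subseteq> ?ext ` PiE ({..<n} \<times> {..<s}) (\<lambda>_. grid m)"
  proof
    fix \<theta> assume \<theta>: "\<theta> \<in> S_sm n s m"
    let ?g = "restrict (\<lambda>(i, b). \<theta> i b) ({..<n} \<times> {..<s})"
    have "?g \<in> PiE ({..<n} \<times> {..<s}) (\<lambda>_. grid m)" using S_sm_grid[OF \<theta>] by auto
    moreover have "\<theta> = ?ext ?g" using S_sm_zero[OF \<theta>] by (intro ext) auto
    ultimately show "\<theta> \<in> ?ext ` PiE ({..<n} \<times> {..<s}) (\<lambda>_. grid m)" by blast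
  qed
  moreover have "finite (PiE ({..<n} \<times> {..<s}) (\<lambda>_. grid m))"
    by (intro finite_PiE) (auto simp: finite_grid)
  ultimately show ?thesis by (simp add: finite_surj)
qed

lemma level_ge_minus_one: "-1 \<le> level s \<theta> i x"
  unfolding level_def by auto

lemma level_le: "level s \<theta> i x \<le> int s - 1"
proof (cases "\<exists>b<s. \<theta> i b \<le> x")
  case True
  then have "Max {b. b < s \<and> \<theta> i b \<le> x} \<in> {b. b < s \<and> \<theta> i b \<le> x}"
    by (intro Max_in) auto
  then show ?thesis using True unfolding level_def by auto
qed (auto simp: level_def)

lemma int_le_level_iff:
  assumes \<theta>: "\<theta> \<in> S_sm n s m" and i: "i < n" and b: "b < s"
  shows "int b \<le> level s \<theta> i x \<longleftrightarrow> \<theta> i b \<le> x"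
proof -
  let ?B = "{b. b < s \<and> \<theta> i b \<le> x}"
  show ?thesis
  proof
    assume le: "int b \<le> level s \<theta> i x"
    then have "?B \<noteq> {}" unfolding level_def by (auto split: if_splits)
    then have "Max ?B \<in> ?B" by (intro Max_in) auto
    moreover have "b \<le> Max ?B" using le \<open>?B \<noteq> {}\<close> unfolding level_def by auto
    ultimately show "\<theta> i b \<le> x" using S_sm_mono[OF \<theta> i, of b "Max ?B"] by auto
  next
    assume "\<theta> i b \<le> x"
    then show "int b \<le> level s \<theta> i x" using b unfolding level_def by auto
  qed
qed

lemma level_eqI:
  fixes c :: int
  assumes \<theta>: "\<theta> \<in> S_sm n s m" and i: "i < n" and c: "-1 \<le> c" "c \<le> int s - 1"
    and reach: "\<And>b. b < s \<Longrightarrow> \<theta> i b \<le> x \<longleftrightarrow> int b \<le> c"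
  shows "level s \<theta> i x = c"
proof (rule ccontr)
  assume ne: "level s \<theta> i x \<noteq> c"
  define b where "b = nat (max (level s \<theta> i x) c)"
  have "b < s" "int b = max (level s \<theta> i x) c"
    using ne c level_ge_minus_one[of s \<theta> i x] level_le[of s \<theta> i x] unfolding b_def by auto
  then show False using ne reach[of b] int_le_level_iff[OF \<theta> i, of b x] by auto
qed

lemma level_one:
  assumes "\<theta> \<in> S_sm n s m" and "j < n"
  shows "level s \<theta> j 1 = int s - 1"
  by (rule level_eqI[OF assms]) (use S_sm_bounds[OF assms] in auto)

lemma level_zero:
  assumes \<theta>: "\<theta> \<in> S_sm n s m" and j: "j < n" and s: "1 \<le> s"
  shows "level s \<theta> j 0 = (if \<theta> j 0 = 0 then 0 else -1)"
proof (rule level_eqI[OF \<theta> j])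
  fix b assume b: "b < s"
  have "0 \<le> \<theta> j 0" using S_sm_bounds[OF \<theta> j] s by simp
  moreover have "0 < b \<Longrightarrow> \<theta> j 0 < \<theta> j b" using S_sm_strict_mono[OF \<theta> j _ b] by simp
  ultimately show "\<theta> j b \<le> 0 \<longleftrightarrow> int b \<le> (if \<theta> j 0 = 0 then 0 else -1)"
    by (cases "b = 0") auto
qed (use s in auto)

lemma level_single_level:
  assumes "\<theta> \<in> S_sm n 1 m" and "j < n"
  shows "level 1 \<theta> j x = (if \<theta> j 0 \<le> x then 0 else -1)"
  by (rule level_eqI[OF assms]) auto

lemma level_threshold:
  assumes \<theta>: "\<theta> \<in> S_sm n s m" and j: "j < n" and b: "b < s"
  shows "level s \<theta> j (\<theta> j b) = int b"
proof (rule level_eqI[OF \<theta> j])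
  fix b' assume "b' < s"
  then show "\<theta> j b' \<le> \<theta> j b \<longleftrightarrow> int b' \<le> int b"
    using S_sm_mono[OF \<theta> j _ b] S_sm_strict_mono[OF \<theta> j, of b b'] by force
qed (use b in auto)

lemma level_mono:
  assumes \<theta>: "\<theta> \<in> S_sm n s m" and j: "j < n" and "x \<le> y"
  shows "level s \<theta> j x \<le> level s \<theta> j y"
proof (cases "0 \<le> level s \<theta> j x")
  case True
  define b where "b = nat (level s \<theta> j x)"
  have b: "b < s" "int b = level s \<theta> j x"
    using True level_le[of s \<theta> j x] unfolding b_def by auto
  then have "\<theta> j b \<le> y" using int_le_level_iff[OF \<theta> j b(1), of x] \<open>x \<le> y\<close> by simp
  then show ?thesis using int_le_level_iff[OF \<theta> j b(1), of y] b(2) by simp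
qed (use level_ge_minus_one[of s \<theta> j y] in auto)

text \<open>Thresholds are distinct grid points, so at most one of them lies in \<open>(l/m, (l+1)/m]\<close>.\<close>
lemma level_Suc_grid_le:
  assumes \<theta>: "\<theta> \<in> S_sm n s m" and j: "j < n" and m: "1 \<le> m"
  shows "level s \<theta> j (real (Suc l) / real m) \<le> level s \<theta> j (real l / real m) + 1"
proof (cases "level s \<theta> j (real (Suc l) / real m) \<le> 0")
  case False
  define b where "b = nat (level s \<theta> j (real (Suc l) / real m))"
  have b: "1 \<le> b" "b < s" "int b = level s \<theta> j (real (Suc l) / real m)"
    using False level_le[of s \<theta> j "real (Suc l) / real m"] unfolding b_def by auto
  have "\<theta> j b \<le> real (Suc l) / real m" using int_le_level_iff[OF \<theta> j b(2)] b(3) by (metis order_refl)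
  moreover have "\<theta> j (b - 1) < \<theta> j b" using S_sm_strict_mono[OF \<theta> j _ b(2)] b(1) by simp
  ultimately have "\<theta> j (b - 1) < real (Suc l) / real m" by linarith
  moreover have "b - 1 < s" using b(2) by linarith
  ultimately have "\<theta> j (b - 1) \<le> real (Suc l) / real m - 1 / real m"
    using grid_less_imp_le_minus[OF S_sm_grid[OF \<theta> j] m] by blast
  then have "\<theta> j (b - 1) \<le> real l / real m" by (simp add: diff_divide_distrib[symmetric])
  then have "int (b - 1) \<le> level s \<theta> j (real l / real m)"
    using int_le_level_iff[OF \<theta> j, of "b - 1"] b(2) by simp
  then show ?thesis using b by linarith
qed (use level_ge_minus_one[of s \<theta> j "real l / real m"] in simp)

abbreviation levels :: "nat \<Rightarrow> (nat \<Rightarrow> nat \<Rightarrow> real) \<Rightarrow> (nat \<Rightarrow> real) \<Rightarrow> nat \<Rightarrow> int" where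
  "levels s \<theta> v \<equiv> \<lambda>j. level s \<theta> j (v j)"

definition wins :: "nat \<Rightarrow> (nat \<Rightarrow> int) \<Rightarrow> nat \<Rightarrow> bool" where
  "wins n lv w \<longleftrightarrow> w < n \<and> 0 \<le> lv w \<and> (\<forall>j<w. lv j < lv w) \<and> (\<forall>j<n. lv j \<le> lv w)"

lemma winner_eq_Some_iff: "winner n s \<theta> v = Some w \<longleftrightarrow> wins n (levels s \<theta> v) w"
proof -
  define lv where "lv = levels s \<theta> v"
  let ?P = "\<lambda>i. i < n \<and> (\<forall>j<n. lv j \<le> lv i)"
  have lv: "lv j = -1 \<or> 0 \<le> lv j" for j unfolding lv_def level_def by auto
  have "(\<not> (\<forall>i<n. lv i = -1) \<and> (LEAST i. ?P i) = w) \<longleftrightarrow> wins n lv w"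
  proof
    assume "\<not> (\<forall>i<n. lv i = -1) \<and> (LEAST i. ?P i) = w"
    then obtain k where k: "k < n" "0 \<le> lv k" and w: "w = (LEAST i. ?P i)" using lv by blast
    obtain i where "i < n" "lv i = Max (lv ` {..<n})"
      using Max_in[of "lv ` {..<n}"] k(1) by fastforce
    then have "?P i" by (auto intro: Max_ge)
    then have Pw: "?P w" unfolding w by (rule LeastI[of ?P])
    have "lv j < lv w" if "j < w" for j
    proof -
      have "\<not> ?P j" using that unfolding w by (rule not_less_Least)
      moreover have "j < n" using that Pw by simp
      ultimately obtain k where "k < n" "lv j < lv k" by (auto simp: not_le)
      moreover have "lv k \<le> lv w" using Pw \<open>k < n\<close> by blast
      ultimately show ?thesis by linarith
    qed
    then show "wins n lv w" using Pw k unfolding wins_def by force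
  next
    assume W: "wins n lv w"
    then have "(LEAST i. ?P i) = w"
      unfolding wins_def by (intro Least_equality) (auto simp: not_le[symmetric])
    then show "\<not> (\<forall>i<n. lv i = -1) \<and> (LEAST i. ?P i) = w" using W unfolding wins_def by force
  qed
  then show ?thesis unfolding winner_def lv_def by auto
qed

lemma winner_cong:
  assumes "\<And>w. wins n (levels s \<theta> v) w \<longleftrightarrow> wins n (levels s' \<theta>' v') w"
  shows "winner n s \<theta> v = winner n s' \<theta>' v'"
proof -
  have eq: "winner n s \<theta> v = Some w \<longleftrightarrow> winner n s' \<theta>' v' = Some w" for w
    unfolding winner_eq_Some_iff by (rule assms)
  show ?thesis
  proof (cases "winner n s \<theta> v")
    case None
    then show ?thesis using eq by (metis option.exhaust)
  next
    case (Some w)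
    then show ?thesis using eq[of w] by simp
  qed
qed

lemma wins_upd_iff:
  "wins n (lv(w := L)) w \<longleftrightarrow> w < n \<and> 0 \<le> L \<and> (\<forall>j<w. lv j < L) \<and> (\<forall>j<n. j \<noteq> w \<longrightarrow> lv j \<le> L)"
  unfolding wins_def by (auto simp: fun_upd_apply)

lemma wins_upd_mono: "wins n (lv(w := L)) w \<Longrightarrow> L \<le> L' \<Longrightarrow> wins n (lv(w := L')) w"
  unfolding wins_upd_iff by (meson less_le_trans order_trans)

lemma Rev_eq_threshold:
  assumes \<theta>: "\<theta> \<in> S_sm n s m" and W: "winner n s \<theta> v = Some w" and K: "K < s"
    and crit: "\<And>L. wins n ((levels s \<theta> v)(w := L)) w \<longleftrightarrow> int K \<le> L"
  shows "Rev n s \<theta> v = \<theta> w K"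
proof -
  have w: "w < n" using W unfolding winner_eq_Some_iff wins_def by blast
  have "levels s \<theta> (v(w := b)) = (levels s \<theta> v)(w := level s \<theta> w b)" for b by auto
  then have "winner n s \<theta> (v(w := b)) = Some w \<longleftrightarrow> \<theta> w K \<le> b" for b
    by (simp add: winner_eq_Some_iff crit int_le_level_iff[OF \<theta> w K])
  then have "{b \<in> {0..1}. winner n s \<theta> (v(w := b)) = Some w} = {\<theta> w K..1}"
    using S_sm_bounds[OF \<theta> w K] by (intro set_eqI) (simp only: mem_Collect_eq atLeastAtMost_iff, linarith)
  then show ?thesis using W S_sm_bounds[OF \<theta> w K] unfolding Rev_def by simp
qed

lemma Rev_threshold:
  assumes \<theta>: "\<theta> \<in> S_sm n s m" and W: "winner n s \<theta> v = Some w"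
  shows "\<exists>K<s. Rev n s \<theta> v = \<theta> w K"
proof -
  define lv where "lv = levels s \<theta> v"
  define K where "K = (LEAST k. wins n (lv(w := int k)) w)"
  have "wins n lv w" using W unfolding winner_eq_Some_iff lv_def .
  then have "wins n (lv(w := int (nat (lv w)))) w" unfolding wins_def by auto
  then have K: "wins n (lv(w := int K)) w" "K \<le> nat (lv w)"
    unfolding K_def by (fact LeastI, fact Least_le)
  have "K < s" using K(2) level_le[of s \<theta> w "v w"] \<open>wins n lv w\<close> unfolding lv_def wins_def by linarith
  moreover have "wins n (lv(w := L)) w \<longleftrightarrow> int K \<le> L" for L
  proof
    assume L: "wins n (lv(w := L)) w"
    then have "0 \<le> L" unfolding wins_def by simp
    with L have "K \<le> nat L" unfolding K_def by (intro Least_le) simp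
    then show "int K \<le> L" using \<open>0 \<le> L\<close> by linarith
  qed (rule wins_upd_mono[OF K(1)])
  ultimately show ?thesis using Rev_eq_threshold[OF \<theta> W] unfolding lv_def by blast
qed

lemma Rev_in_grid:
  assumes \<theta>: "\<theta> \<in> S_sm n s m"
  shows "Rev n s \<theta> v \<in> grid m"
proof (cases "winner n s \<theta> v")
  case (Some w)
  then have "w < n" unfolding winner_eq_Some_iff wins_def by blast
  then show ?thesis using Rev_threshold[OF \<theta> Some] S_sm_grid[OF \<theta>] by auto
qed (simp add: Rev_def zero_in_grid)

lemma Rev_bounds:
  assumes "\<theta> \<in> S_sm n s m"
  shows "0 \<le> Rev n s \<theta> v \<and> Rev n s \<theta> v \<le> 1"
  using subsetD[OF grid_subset_unit Rev_in_grid[OF assms]] by simp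

section \<open>Reserves that cannot matter\<close>

definition zero_reserve_before :: "(nat \<Rightarrow> nat \<Rightarrow> real) \<Rightarrow> nat \<Rightarrow> bool" where
  "zero_reserve_before \<theta> i \<longleftrightarrow> (\<exists>j<i. \<theta> j 0 = 0)"

lemma not_zero_reserve_before_0 [simp]: "\<not> zero_reserve_before \<theta> 0"
  unfolding zero_reserve_before_def by simp

text \<open>If some earlier bidder has reserve 0, he always bids at a level \<open>\<ge> 0\<close> and wins ties against
  bidder \<open>i\<close>, so the reserve \<open>\<theta> i 0\<close> never influences the outcome. The columns of \<open>\<Gamma>\<^sup>S\<^sup>L\<close>
  determine an auction only up to forgetting these reserves.\<close>
definition normalize_reserves :: "nat \<Rightarrow> (nat \<Rightarrow> nat \<Rightarrow> real) \<Rightarrow> nat \<Rightarrow> nat \<Rightarrow> real" where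
  "normalize_reserves n \<theta> = (\<lambda>i b. if b = 0 \<and> i < n \<and> zero_reserve_before \<theta> i then 0 else \<theta> i b)"

lemma normalize_reserves_in_S_sm:
  assumes \<theta>: "\<theta> \<in> S_sm n s m"
  shows "normalize_reserves n \<theta> \<in> S_sm n s m"
proof -
  have "normalize_reserves n \<theta> i b < normalize_reserves n \<theta> i (Suc b)" if "i < n" "Suc b < s" for i b
    using S_sm_strict_mono[OF \<theta> that(1), of b "Suc b"] S_sm_bounds[OF \<theta> that(1), of b] that
    unfolding normalize_reserves_def by auto
  then show ?thesis using \<theta> zero_in_grid unfolding S_sm_def normalize_reserves_def by auto
qed

lemma level_normalize_reserves:
  assumes \<theta>: "\<theta> \<in> S_sm n s m" and i: "i < n" and x: "0 \<le> x" and s: "1 \<le> s"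
  shows "level s (normalize_reserves n \<theta>) i x
    = (if zero_reserve_before \<theta> i then max (level s \<theta> i x) 0 else level s \<theta> i x)"
proof (cases "zero_reserve_before \<theta> i")
  case True
  have "level s (normalize_reserves n \<theta>) i x = max (level s \<theta> i x) 0"
  proof (rule level_eqI[OF normalize_reserves_in_S_sm[OF \<theta>] i])
    fix b assume b: "b < s"
    show "normalize_reserves n \<theta> i b \<le> x \<longleftrightarrow> int b \<le> max (level s \<theta> i x) 0"
      using int_le_level_iff[OF \<theta> i b, of x] True x i unfolding normalize_reserves_def
      by (cases b) auto
  qed (use level_le[of s \<theta> i x] s in auto)
  then show ?thesis using True by simp
next
  case False
  then have "normalize_reserves n \<theta> i = \<theta> i" unfolding normalize_reserves_def by (intro ext) auto
  then show ?thesis using False unfolding level_def by simp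
qed

text \<open>A bidder preceded by someone at level \<open>\<ge> 0\<close> cannot win at level 0, and beats nobody there
  whom a winner must beat; so raising his level from \<open>-1\<close> to 0 changes nothing.\<close>
lemma wins_raise_levels:
  assumes raise: "\<And>j. j < n \<Longrightarrow> lv' j = (if P j then max (lv j) 0 else lv j)"
    and P: "\<And>j. j < n \<Longrightarrow> P j \<Longrightarrow> \<exists>k<j. 0 \<le> lv k"
  shows "wins n lv' w \<longleftrightarrow> wins n lv w"
proof
  assume "wins n lv' w"
  then have w: "w < n" "0 \<le> lv' w" "\<forall>j<w. lv' j < lv' w" "\<forall>j<n. lv' j \<le> lv' w"
    unfolding wins_def by auto
  have le: "lv j \<le> lv' j" if "j < n" for j using raise[OF that] by auto
  have eq: "lv' w = lv w"
  proof (cases "P w")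
    case True
    then obtain k where k: "k < w" "0 \<le> lv k" using P w(1) by blast
    then have "0 \<le> lv' k" "lv' k < lv' w" using le[of k] w(1,3) by auto
    then show ?thesis using raise[OF w(1)] True by (auto simp: max_def)
  qed (use raise[OF w(1)] in simp)
  show "wins n lv w" unfolding wins_def
  proof (intro conjI allI impI)
    fix j
    assume "j < w"
    then have "j < n" "lv' j < lv' w" using w by auto
    then show "lv j < lv w" using le[of j] eq by linarith
  next
    fix j
    assume "j < n"
    then show "lv j \<le> lv w" using le[of j] w(4) eq by fastforce
  qed (use w eq in auto)
next
  assume "wins n lv w"
  then have w: "w < n" "0 \<le> lv w" "\<forall>j<w. lv j < lv w" "\<forall>j<n. lv j \<le> lv w"
    unfolding wins_def by auto
  have eq: "lv' w = lv w" using raise[OF w(1)] w(2) by auto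
  have below: "lv' j < lv w" if jw: "j < w" for j
  proof (cases "P j")
    case True
    then obtain k where k: "k < j" "0 \<le> lv k" using P jw w(1) by (meson less_trans)
    then have "0 < lv w" using w(3) jw by (meson le_less_trans less_trans)
    then show ?thesis using raise[of j] True jw w(1,3) by (auto simp: max_def)
  qed (use raise[of j] jw w in auto)
  have "lv' j \<le> lv w" if "j < n" for j using raise[OF that] w(2,4) that by (auto simp: max_def)
  then show "wins n lv' w" using eq below w unfolding wins_def by auto
qed

lemma winner_normalize_reserves:
  assumes \<theta>: "\<theta> \<in> S_sm n s m" and v: "\<forall>i<n. 0 \<le> v i" and s: "1 \<le> s"
  shows "winner n s (normalize_reserves n \<theta>) v = winner n s \<theta> v"
proof (rule winner_cong, rule wins_raise_levels)
  show "levels s (normalize_reserves n \<theta>) v j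
    = (if zero_reserve_before \<theta> j then max (levels s \<theta> v j) 0 else levels s \<theta> v j)" if "j < n" for j
    using level_normalize_reserves[OF \<theta> that _ s] v that by simp
  show "\<exists>k<j. 0 \<le> levels s \<theta> v k" if j: "j < n" "zero_reserve_before \<theta> j" for j
  proof -
    obtain k where k: "k < j" "\<theta> k 0 = 0" using j(2) unfolding zero_reserve_before_def by blast
    then have "k < n" using j(1) by simp
    then have "int 0 \<le> level s \<theta> k (v k)" using int_le_level_iff[OF \<theta> \<open>k < n\<close>, of 0] s v k by simp
    then show ?thesis using k by auto
  qed
qed

lemma Rev_normalize_reserves:
  assumes \<theta>: "\<theta> \<in> S_sm n s m" and v: "\<forall>i<n. 0 \<le> v i" and s: "1 \<le> s"
  shows "Rev n s (normalize_reserves n \<theta>) v = Rev n s \<theta> v"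
proof -
  have "winner n s (normalize_reserves n \<theta>) (v(w := b)) = winner n s \<theta> (v(w := b))"
    if "b \<in> {0..1}" for w b
    using winner_normalize_reserves[OF \<theta> _ s, of "v(w := b)"] v that by simp
  then show ?thesis using winner_normalize_reserves[OF \<theta> v s] unfolding Rev_def
    by (auto split: option.splits intro!: arg_cong[where f = Inf])
qed

section \<open>Revenue on the columns of \<open>\<Gamma>\<^sup>S\<^sup>L\<close>\<close>

definition probe :: "nat \<Rightarrow> nat \<Rightarrow> nat \<Rightarrow> nat \<Rightarrow> nat \<Rightarrow> real" where
  "probe n m i l = (\<lambda>j. unitvec i j + (real l / real m) * unitvec (n - 1) j)"

lemma VSL_eq: "VSL n m = (\<lambda>(i, l). probe n m i l) ` ({..<n - 1} \<times> {..m}) \<union> {unitvec (n - 1)}"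
  unfolding VSL_def probe_def by auto

lemma probe_in_VSL: "i < n - 1 \<Longrightarrow> l \<le> m \<Longrightarrow> probe n m i l \<in> VSL n m"
  unfolding VSL_eq by force

lemma unitvec_last_in_VSL: "unitvec (n - 1) \<in> VSL n m"
  unfolding VSL_eq by blast

lemma finite_VSL: "finite (VSL n m)"
  unfolding VSL_eq by auto

lemma card_VSL_le: "card (VSL n m) \<le> (n - 1) * (m + 1) + 1"
proof -
  have "card (VSL n m) \<le> card ((\<lambda>(i, l). probe n m i l) ` ({..<n - 1} \<times> {..m})) + card {unitvec (n - 1)}"
    unfolding VSL_eq by (rule card_Un_le)
  also have "\<dots> \<le> card ({..<n - 1} \<times> {..m}) + 1"
    using card_image_le[of "{..<n - 1} \<times> {..m}" "\<lambda>(i, l). probe n m i l"] by simp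
  finally show ?thesis by (simp add: card_cartesian_product)
qed

lemma wins_upd_high_bid_iff:
  fixes lv :: "nat \<Rightarrow> int"
  assumes i: "i < n" and lv0: "\<And>j. j < n \<Longrightarrow> j \<noteq> i \<Longrightarrow> j \<noteq> n - 1 \<Longrightarrow> lv j = (if \<theta> j 0 = 0 then 0 else -1)"
  shows "wins n (lv(i := L)) i \<longleftrightarrow>
    0 \<le> L \<and> max (of_bool (zero_reserve_before \<theta> i)) (if i = n - 1 then 0 else lv (n - 1)) \<le> L"
    (is "_ \<longleftrightarrow> 0 \<le> L \<and> ?X \<le> L")
proof -
  have below: "j < i \<Longrightarrow> j < n \<and> j \<noteq> i \<and> j \<noteq> n - 1" for j using i by linarith
  show ?thesis unfolding wins_upd_iff
  proof
    assume L: "i < n \<and> 0 \<le> L \<and> (\<forall>j<i. lv j < L) \<and> (\<forall>j<n. j \<noteq> i \<longrightarrow> lv j \<le> L)"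
    have "of_bool (zero_reserve_before \<theta> i) \<le> L"
    proof (cases "zero_reserve_before \<theta> i")
      case True
      then obtain j where "j < i" "\<theta> j 0 = 0" unfolding zero_reserve_before_def by blast
      then show ?thesis using L lv0[of j] below[of j] by auto
    qed (use L in auto)
    moreover have "i \<noteq> n - 1 \<Longrightarrow> lv (n - 1) \<le> L" using L i by simp
    ultimately show "0 \<le> L \<and> ?X \<le> L" using L by auto
  next
    assume L: "0 \<le> L \<and> ?X \<le> L"
    show "i < n \<and> 0 \<le> L \<and> (\<forall>j<i. lv j < L) \<and> (\<forall>j<n. j \<noteq> i \<longrightarrow> lv j \<le> L)"
    proof (intro conjI allI impI)
      fix j
      assume j: "j < i"
      have "\<theta> j 0 = 0 \<Longrightarrow> 1 \<le> ?X" using j unfolding zero_reserve_before_def by auto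
      then show "lv j < L" using lv0[of j] below[OF j] L by (auto split: if_splits)
    next
      fix j
      show "j < n \<Longrightarrow> j \<noteq> i \<Longrightarrow> lv j \<le> L"
        using lv0[of j] L by (cases "j = n - 1") (auto split: if_splits)
    qed (use i L in auto)
  qed
qed

text \<open>Bidder \<open>i\<close> bids 1 against zero bids, except possibly for the last bidder: the payment is
  \<open>i\<close>'s threshold at the level needed to beat the last bidder and, strictly, every earlier bidder
  with reserve 0.\<close>
lemma Rev_single_high_bid:
  assumes \<theta>: "\<theta> \<in> S_sm n s m" and s: "2 \<le> s" and i: "i < n" and qi: "q i = 1"
    and q0: "\<And>j. j < n \<Longrightarrow> j \<noteq> i \<Longrightarrow> j \<noteq> n - 1 \<Longrightarrow> q j = 0"
  shows "Rev n s \<theta> q = \<theta> i (nat (max (of_bool (zero_reserve_before \<theta> i))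
            (if i = n - 1 then 0 else level s \<theta> (n - 1) (q (n - 1)))))"
proof -
  define lv where "lv = levels s \<theta> q"
  define X where "X = max (of_bool (zero_reserve_before \<theta> i)) (if i = n - 1 then 0 else lv (n - 1))"
  have lvi: "lv i = int s - 1" unfolding lv_def qi by (rule level_one[OF \<theta> i])
  have lv0: "lv j = (if \<theta> j 0 = 0 then 0 else -1)" if "j < n" "j \<noteq> i" "j \<noteq> n - 1" for j
    unfolding lv_def using q0[OF that] level_zero[OF \<theta> that(1)] s by simp
  have lv_le: "lv j \<le> int s - 1" for j unfolding lv_def by (rule level_le)
  have W: "winner n s \<theta> q = Some i"
    unfolding winner_eq_Some_iff lv_def[symmetric] wins_def
  proof (intro conjI allI impI)
    fix j assume "j < i"
    then show "lv j < lv i" using lv0[of j] i lvi s by auto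
  qed (use i lvi s lv_le in auto)
  have X: "0 \<le> X" "X < int s" unfolding X_def using lv_le[of "n - 1"] s by auto
  have "Rev n s \<theta> q = \<theta> i (nat X)"
  proof (rule Rev_eq_threshold[OF \<theta> W])
    show "nat X < s" using X by linarith
    show "wins n ((levels s \<theta> q)(i := L)) i \<longleftrightarrow> int (nat X) \<le> L" for L
      using wins_upd_high_bid_iff[where \<theta> = \<theta>, OF i lv0, of L] X
      unfolding lv_def[symmetric] X_def[symmetric] by linarith
  qed
  then show ?thesis unfolding X_def lv_def .
qed

lemma Rev_probe:
  assumes "\<theta> \<in> S_sm n s m" and "2 \<le> s" and i: "i < n - 1"
  shows "Rev n s \<theta> (probe n m i l) = \<theta> i (nat (max (of_bool (zero_reserve_before \<theta> i))
            (max 0 (level s \<theta> (n - 1) (real l / real m)))))"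
proof -
  have "max (of_bool z) (x::int) = max (of_bool z) (max 0 x)" for z x by auto
  then show ?thesis
    using Rev_single_high_bid[OF assms(1,2), of i "probe n m i l"] i
    by (simp add: probe_def unitvec_def)
qed

lemma Rev_unitvec_last:
  assumes "\<theta> \<in> S_sm n s m" and "2 \<le> s" and "2 \<le> n"
  shows "Rev n s \<theta> (unitvec (n - 1)) = \<theta> (n - 1) (of_bool (zero_reserve_before \<theta> (n - 1)))"
  using Rev_single_high_bid[OF assms(1,2), of "n - 1" "unitvec (n - 1)"] assms(3)
  by (simp add: unitvec_def)

text \<open>With a single level, every bidder whose reserve is at most his bid ties, and the first of them
  wins.\<close>
lemma Rev_single_level_zero_reserve:
  assumes \<theta>: "\<theta> \<in> S_sm n 1 m" and z: "z < n" "\<theta> z 0 = 0" and q0: "\<And>j. j \<le> z \<Longrightarrow> q j = 0"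
  shows "Rev n 1 \<theta> q = 0"
proof -
  define lv where "lv = levels 1 \<theta> q"
  have lv: "lv j = (if \<theta> j 0 \<le> q j then 0 else -1)" if "j < n" for j
    unfolding lv_def using level_single_level[OF \<theta> that] by simp
  have "lv z = 0" using lv[OF z(1)] z(2) q0[of z] by simp
  then have "winner n 1 \<theta> q \<noteq> None" using z(1) unfolding winner_def lv_def by auto
  then obtain w where W: "winner n 1 \<theta> q = Some w" by blast
  then have w: "wins n lv w" unfolding lv_def winner_eq_Some_iff .
  have "w \<le> z"
  proof (rule ccontr)
    assume "\<not> w \<le> z"
    then have "lv z < lv w" using w unfolding wins_def by simp
    moreover have "lv w \<le> 0" using level_le[of 1 \<theta> w "q w"] unfolding lv_def by simp
    ultimately show False using \<open>lv z = 0\<close> by simp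
  qed
  then have "w < n" using z(1) by simp
  then have "\<theta> w 0 \<le> 0" using w lv[of w] q0[OF \<open>w \<le> z\<close>] unfolding wins_def by (auto split: if_splits)
  then have "\<theta> w 0 = 0" using S_sm_bounds[OF \<theta> \<open>w < n\<close>, of 0] by simp
  moreover obtain K where "K < 1" "Rev n 1 \<theta> q = \<theta> w K" using Rev_threshold[OF \<theta> W] by blast
  ultimately show ?thesis by simp
qed

lemma Rev_single_level:
  assumes \<theta>: "\<theta> \<in> S_sm n 1 m" and i: "i < n" and qi: "q i = 1"
    and q0: "\<And>j. j < i \<Longrightarrow> q j = 0" and q: "\<forall>j<n. 0 \<le> q j"
  shows "Rev n 1 \<theta> q = (if zero_reserve_before \<theta> i then 0 else \<theta> i 0)"
proof (cases "zero_reserve_before \<theta> i")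
  case True
  then obtain z where z: "z < i" "\<theta> z 0 = 0" unfolding zero_reserve_before_def by blast
  then show ?thesis using Rev_single_level_zero_reserve[OF \<theta> _ z(2)] q0 i True by simp
next
  case False
  define lv where "lv = levels 1 \<theta> q"
  have lv: "lv j = (if \<theta> j 0 \<le> q j then 0 else -1)" if "j < n" for j
    unfolding lv_def using level_single_level[OF \<theta> that] by simp
  have lv_below: "lv j = -1" if "j < i" for j
    using lv[of j] that i q0[OF that] False S_sm_bounds[OF \<theta>, of j 0]
    unfolding zero_reserve_before_def by auto
  have lv_le: "lv j \<le> 0" if "j < n" for j using lv[OF that] by simp
  have W: "winner n 1 \<theta> q = Some i"
    unfolding winner_eq_Some_iff lv_def[symmetric] wins_def
    using i lv[OF i] qi S_sm_bounds[OF \<theta> i, of 0] lv_below lv_le by auto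
  have "Rev n 1 \<theta> q = \<theta> i 0"
  proof (rule Rev_eq_threshold[OF \<theta> W])
    fix L
    have "(\<forall>j<i. lv j < L) \<and> (\<forall>j<n. j \<noteq> i \<longrightarrow> lv j \<le> L)" if "0 \<le> L"
      using lv_below lv_le that by force
    then show "wins n ((levels 1 \<theta> q)(i := L)) i \<longleftrightarrow> int 0 \<le> L"
      unfolding lv_def[symmetric] wins_upd_iff using i by auto
  qed simp
  then show ?thesis unfolding if_not_P[OF False] .
qed

lemma Rev_probe_single_level:
  assumes "\<theta> \<in> S_sm n 1 m" and i: "i < n - 1" and m: "1 \<le> m"
  shows "Rev n 1 \<theta> (probe n m i l) = (if zero_reserve_before \<theta> i then 0 else \<theta> i 0)"
  by (rule Rev_single_level[OF assms(1)]) (use i m in \<open>auto simp: probe_def unitvec_def\<close>)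

lemma Rev_unitvec_last_single_level:
  assumes "\<theta> \<in> S_sm n 1 m" and "2 \<le> n"
  shows "Rev n 1 \<theta> (unitvec (n - 1)) = (if zero_reserve_before \<theta> (n - 1) then 0 else \<theta> (n - 1) 0)"
  by (rule Rev_single_level[OF assms(1)]) (use assms(2) in \<open>auto simp: unitvec_def\<close>)

section \<open>The columns of \<open>\<Gamma>\<^sup>S\<^sup>L\<close> determine the revenue\<close>

definition same_Gamma :: "nat \<Rightarrow> nat \<Rightarrow> nat \<Rightarrow> (nat \<Rightarrow> nat \<Rightarrow> real) \<Rightarrow> (nat \<Rightarrow> nat \<Rightarrow> real) \<Rightarrow> bool" where
  "same_Gamma n s m \<theta> \<theta>' \<longleftrightarrow> (\<forall>w\<in>VSL n m. Rev n s \<theta> w = Rev n s \<theta>' w)"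

lemma normalize_reserves_eq_single_level:
  assumes \<theta>: "\<theta> \<in> S_sm n 1 m" and \<theta>': "\<theta>' \<in> S_sm n 1 m" and n: "2 \<le> n" and m: "1 \<le> m"
    and same: "same_Gamma n 1 m \<theta> \<theta>'"
  shows "normalize_reserves n \<theta> = normalize_reserves n \<theta>'"
proof (intro ext)
  fix i b
  show "normalize_reserves n \<theta> i b = normalize_reserves n \<theta>' i b"
  proof (cases "i < n \<and> b = 0")
    case True
    have "(if zero_reserve_before \<theta> i then 0 else \<theta> i 0) = (if zero_reserve_before \<theta>' i then 0 else \<theta>' i 0)"
    proof (cases "i < n - 1")
      case True
      have "Rev n 1 \<theta> (probe n m i 0) = Rev n 1 \<theta>' (probe n m i 0)"
        using same probe_in_VSL[OF True, of 0 m] unfolding same_Gamma_def by blast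
      then show ?thesis
        using Rev_probe_single_level[OF \<theta> True m] Rev_probe_single_level[OF \<theta>' True m] by simp
    next
      case False
      then have i: "i = n - 1" using \<open>i < n \<and> b = 0\<close> by arith
      have "Rev n 1 \<theta> (unitvec (n - 1)) = Rev n 1 \<theta>' (unitvec (n - 1))"
        using same unitvec_last_in_VSL[of n m] unfolding same_Gamma_def by blast
      then show ?thesis
        using Rev_unitvec_last_single_level[OF \<theta> n] Rev_unitvec_last_single_level[OF \<theta>' n]
        unfolding i by simp
    qed
    then show ?thesis using True unfolding normalize_reserves_def by (auto split: if_splits)
  next
    case False
    then show ?thesis using S_sm_zero[OF \<theta>, of i b] S_sm_zero[OF \<theta>', of i b]
      unfolding normalize_reserves_def by auto
  qed
qed

text \<open>Against \<open>e\<^sub>i + (l/m) e\<^sub>n\<close> the payment of bidder \<open>i\<close> is governed by the (clipped) level of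
  the last bidder at \<open>l/m\<close>.\<close>
abbreviation last_level :: "nat \<Rightarrow> (nat \<Rightarrow> nat \<Rightarrow> real) \<Rightarrow> nat \<Rightarrow> nat \<Rightarrow> nat \<Rightarrow> int" where
  "last_level s \<theta> n m l \<equiv> max 0 (level s \<theta> (n - 1) (real l / real m))"

lemma last_level_zero:
  assumes "\<theta> \<in> S_sm n s m" and "2 \<le> n" and "1 \<le> s"
  shows "last_level s \<theta> n m 0 = 0"
  using level_zero[OF assms(1), of "n - 1"] assms(2,3) by simp

lemma last_level_Suc:
  assumes \<theta>: "\<theta> \<in> S_sm n s m" and n: "2 \<le> n" and m: "1 \<le> m"
  shows "last_level s \<theta> n m l \<le> last_level s \<theta> n m (Suc l)"
    and "last_level s \<theta> n m (Suc l) \<le> last_level s \<theta> n m l + 1"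
proof -
  have "n - 1 < n" using n by simp
  moreover have "real l / real m \<le> real (Suc l) / real m" by (simp add: divide_right_mono)
  ultimately have "level s \<theta> (n - 1) (real l / real m) \<le> level s \<theta> (n - 1) (real (Suc l) / real m)"
    by (rule level_mono[OF \<theta>])
  then show "last_level s \<theta> n m l \<le> last_level s \<theta> n m (Suc l)" by (auto simp: max_def)
  show "last_level s \<theta> n m (Suc l) \<le> last_level s \<theta> n m l + 1"
    using level_Suc_grid_le[OF \<theta> \<open>n - 1 < n\<close> m, of l] by linarith
qed

lemma last_level_less: "1 \<le> s \<Longrightarrow> last_level s \<theta> n m l < int s"
  using level_le[of s \<theta> "n - 1" "real l / real m"] by simp

lemma last_level_threshold:
  assumes \<theta>: "\<theta> \<in> S_sm n s m" and n: "2 \<le> n" and b: "b < s" and k: "\<theta> (n - 1) b = real k / real m"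
  shows "last_level s \<theta> n m k = int b"
  using level_threshold[OF \<theta> _ b, of "n - 1"] n k by simp

lemma Rev_probe_first:
  assumes "\<theta> \<in> S_sm n s m" and "2 \<le> s" and "2 \<le> n"
  shows "Rev n s \<theta> (probe n m 0 l) = \<theta> 0 (nat (last_level s \<theta> n m l))"
  using Rev_probe[OF assms(1,2), of 0 l] assms(3) by simp

lemma zero_reserve_before_iff_Rev_probe:
  assumes \<theta>: "\<theta> \<in> S_sm n s m" and n: "2 \<le> n" and s: "2 \<le> s" and i: "i < n - 1"
    and l1: "last_level s \<theta> n m l1 = 1"
  shows "zero_reserve_before \<theta> i \<longleftrightarrow> Rev n s \<theta> (probe n m i 0) = Rev n s \<theta> (probe n m i l1)"
proof -
  have "Rev n s \<theta> (probe n m i 0) = \<theta> i (of_bool (zero_reserve_before \<theta> i))"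
    using Rev_probe[OF \<theta> s i, of 0] last_level_zero[OF \<theta> n] s by simp
  moreover have "Rev n s \<theta> (probe n m i l1) = \<theta> i 1"
    using Rev_probe[OF \<theta> s i, of l1] l1 by simp
  moreover have "\<theta> i 0 \<noteq> \<theta> i 1" using S_sm_strict_mono[OF \<theta>, of i 0 1] i s by fastforce
  ultimately show ?thesis by auto
qed

locale Gamma_twins =
  fixes n s m :: nat and \<theta> \<theta>' :: "nat \<Rightarrow> nat \<Rightarrow> real"
  assumes \<theta>: "\<theta> \<in> S_sm n s m" and \<theta>': "\<theta>' \<in> S_sm n s m"
    and n: "2 \<le> n" and m: "1 \<le> m" and s: "2 \<le> s"
    and same: "same_Gamma n s m \<theta> \<theta>'"
begin

lemma swap: "Gamma_twins n s m \<theta>' \<theta>"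
  using \<theta> \<theta>' n m s same unfolding Gamma_twins_def same_Gamma_def by simp

lemma same_Rev: "w \<in> VSL n m \<Longrightarrow> Rev n s \<theta> w = Rev n s \<theta>' w"
  using same unfolding same_Gamma_def by blast

text \<open>Bidder 0 against \<open>l/m\<close> pays \<open>\<theta> 0 (last_level l)\<close>; since \<open>\<theta> 0\<close> is injective and the last
  level rises by at most one per grid step, these payments reveal the whole last level.\<close>
lemma last_level_eq: "l \<le> m \<Longrightarrow> last_level s \<theta> n m l = last_level s \<theta>' n m l"
proof (induction l)
  case 0
  show ?case using last_level_zero[OF \<theta> n] last_level_zero[OF \<theta>' n] s by simp
next
  case (Suc l)
  have inj: "\<theta>'' 0 (nat (last_level s \<theta>'' n m a)) = \<theta>'' 0 (nat (last_level s \<theta>'' n m b))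
      \<longleftrightarrow> last_level s \<theta>'' n m a = last_level s \<theta>'' n m b" if "\<theta>'' \<in> S_sm n s m" for \<theta>'' a b
  proof
    have lt: "nat (last_level s \<theta>'' n m l) < s" for l using last_level_less[of s] s by (simp add: nat_less_iff)
    assume "\<theta>'' 0 (nat (last_level s \<theta>'' n m a)) = \<theta>'' 0 (nat (last_level s \<theta>'' n m b))"
    moreover have "0 < n" using n by simp
    ultimately have "nat (last_level s \<theta>'' n m a) = nat (last_level s \<theta>'' n m b)"
      using S_sm_inj[OF that \<open>0 < n\<close> lt lt] by blast
    then show "last_level s \<theta>'' n m a = last_level s \<theta>'' n m b" by (simp add: eq_nat_nat_iff)
  qed simp
  have payment: "\<theta> 0 (nat (last_level s \<theta> n m k)) = \<theta>' 0 (nat (last_level s \<theta>' n m k))" if "k \<le> m" for k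
    using same_Rev[OF probe_in_VSL[of 0 n k m]] that n
    unfolding Rev_probe_first[OF \<theta> s n] Rev_probe_first[OF \<theta>' s n] by simp
  have "last_level s \<theta> n m (Suc l) = last_level s \<theta> n m l
      \<longleftrightarrow> last_level s \<theta>' n m (Suc l) = last_level s \<theta>' n m l"
    using inj[OF \<theta>, of "Suc l" l] inj[OF \<theta>', of "Suc l" l] payment[of "Suc l"] payment[of l] Suc.prems
    by simp
  then show ?case
    using Suc last_level_Suc[OF \<theta> n m, of l] last_level_Suc[OF \<theta>' n m, of l] by linarith
qed

lemma last_threshold_le:
  assumes "1 \<le> b" and b: "b < s"
  shows "\<theta>' (n - 1) b \<le> \<theta> (n - 1) b"
proof -
  have N: "n - 1 < n" using n by simp
  obtain k where k: "k \<le> m" "\<theta> (n - 1) b = real k / real m"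
    using S_sm_grid[OF \<theta> N b] unfolding grid_def by auto
  have "last_level s \<theta>' n m k = int b"
    using last_level_threshold[OF \<theta> n b k(2)] last_level_eq[OF k(1)] by simp
  then have "int b \<le> level s \<theta>' (n - 1) (real k / real m)" using assms(1) by linarith
  then show ?thesis using int_le_level_iff[OF \<theta>' N b] k(2) by simp
qed

lemma last_thresholds_eq: "1 \<le> b \<Longrightarrow> b < s \<Longrightarrow> \<theta> (n - 1) b = \<theta>' (n - 1) b"
  using last_threshold_le Gamma_twins.last_threshold_le[OF swap] by (meson order_antisym)

lemma exists_last_level_one: "\<exists>l1\<le>m. last_level s \<theta> n m l1 = 1 \<and> last_level s \<theta>' n m l1 = 1"
proof -
  obtain l1 where "l1 \<le> m" "\<theta> (n - 1) 1 = real l1 / real m"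
    using S_sm_grid[OF \<theta>, of "n - 1" 1] n s unfolding grid_def by auto
  then show ?thesis using last_level_threshold[OF \<theta> n, of 1 l1] last_level_eq s by auto
qed

lemma zero_reserve_before_iff:
  assumes i: "i < n - 1"
  shows "zero_reserve_before \<theta> i \<longleftrightarrow> zero_reserve_before \<theta>' i"
proof -
  obtain l1 where "l1 \<le> m" "last_level s \<theta> n m l1 = 1" "last_level s \<theta>' n m l1 = 1"
    using exists_last_level_one by blast
  then show ?thesis
    using zero_reserve_before_iff_Rev_probe[OF \<theta> n s i] zero_reserve_before_iff_Rev_probe[OF \<theta>' n s i]
      same_Rev[OF probe_in_VSL[OF i, of 0 m]] same_Rev[OF probe_in_VSL[OF i \<open>l1 \<le> m\<close>]] by simp
qed

lemma thresholds_eq_before_last: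
  assumes i: "i < n - 1" and b: "b < s" and relevant: "\<not> (b = 0 \<and> zero_reserve_before \<theta> i)"
  shows "\<theta> i b = \<theta>' i b"
proof (cases "b = 0")
  case True
  then have "\<not> zero_reserve_before \<theta> i" "\<not> zero_reserve_before \<theta>' i"
    using relevant zero_reserve_before_iff[OF i] by auto
  then show ?thesis
    using same_Rev[OF probe_in_VSL[OF i, of 0 m]] True
    unfolding Rev_probe[OF \<theta> s i] Rev_probe[OF \<theta>' s i]
    using last_level_zero[OF \<theta> n] last_level_zero[OF \<theta>' n] s by simp
next
  case False
  have N: "n - 1 < n" using n by simp
  obtain k where k: "k \<le> m" "\<theta> (n - 1) b = real k / real m"
    using S_sm_grid[OF \<theta> N b] unfolding grid_def by auto
  have "last_level s \<theta> n m k = int b" "last_level s \<theta>' n m k = int b"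
    using last_level_threshold[OF \<theta> n b k(2)] last_level_eq[OF k(1)] by simp_all
  moreover have "nat (max (of_bool z) (int b)) = b" for z using False by (cases z) auto
  ultimately show ?thesis
    using same_Rev[OF probe_in_VSL[OF i k(1)]] unfolding Rev_probe[OF \<theta> s i] Rev_probe[OF \<theta>' s i]
    by simp
qed

lemma zero_reserve_before_last_iff: "zero_reserve_before \<theta> (n - 1) \<longleftrightarrow> zero_reserve_before \<theta>' (n - 1)"
proof -
  obtain i where i: "n - 1 = Suc i" using n by (cases "n - 1") auto
  then have "i < n - 1" by simp
  have step: "zero_reserve_before \<theta>'' (Suc i) \<longleftrightarrow> zero_reserve_before \<theta>'' i \<or> \<theta>'' i 0 = 0" for \<theta>''
    unfolding zero_reserve_before_def by (auto simp: less_Suc_eq)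
  have "\<not> zero_reserve_before \<theta> i \<Longrightarrow> \<theta> i 0 = \<theta>' i 0"
    using thresholds_eq_before_last[OF \<open>i < n - 1\<close>, of 0] s by simp
  then show ?thesis unfolding i step using zero_reserve_before_iff[OF \<open>i < n - 1\<close>]
    by (cases "zero_reserve_before \<theta> i") simp_all
qed

lemma last_reserve_eq:
  assumes "\<not> zero_reserve_before \<theta> (n - 1)"
  shows "\<theta> (n - 1) 0 = \<theta>' (n - 1) 0"
proof -
  have "\<not> zero_reserve_before \<theta>' (n - 1)" using assms zero_reserve_before_last_iff by simp
  then show ?thesis using assms same_Rev[OF unitvec_last_in_VSL]
    unfolding Rev_unitvec_last[OF \<theta> s n] Rev_unitvec_last[OF \<theta>' s n] by simp
qed

lemma normalize_reserves_eq: "normalize_reserves n \<theta> = normalize_reserves n \<theta>'"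
proof (intro ext)
  fix i b
  show "normalize_reserves n \<theta> i b = normalize_reserves n \<theta>' i b"
  proof (cases "i < n \<and> b < s")
    case True
    have zero_iff: "zero_reserve_before \<theta> i \<longleftrightarrow> zero_reserve_before \<theta>' i"
    proof (cases "i < n - 1")
      case False
      then have "i = n - 1" using True by arith
      then show ?thesis using zero_reserve_before_last_iff by simp
    qed (rule zero_reserve_before_iff)
    have "\<theta> i b = \<theta>' i b" if "\<not> (b = 0 \<and> zero_reserve_before \<theta> i)"
    proof (cases "i < n - 1")
      case True
      then show ?thesis using thresholds_eq_before_last that \<open>i < n \<and> b < s\<close> by blast
    next
      case False
      then have "i = n - 1" using \<open>i < n \<and> b < s\<close> by arith
      then show ?thesis using last_reserve_eq last_thresholds_eq that \<open>i < n \<and> b < s\<close>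
        by (cases "b = 0") auto
    qed
    then show ?thesis using zero_iff True unfolding normalize_reserves_def by auto
  next
    case False
    then have "n \<le> i \<or> s \<le> b" by auto
    then show ?thesis using S_sm_zero[OF \<theta>] S_sm_zero[OF \<theta>'] s
      unfolding normalize_reserves_def by auto
  qed
qed

end

theorem Rev_eq_if_same_Gamma:
  assumes \<theta>: "\<theta> \<in> S_sm n s m" and \<theta>': "\<theta>' \<in> S_sm n s m" and n: "2 \<le> n" and m: "1 \<le> m"
    and s: "1 \<le> s" and same: "same_Gamma n s m \<theta> \<theta>'" and v: "\<forall>i<n. 0 \<le> v i"
  shows "Rev n s \<theta> v = Rev n s \<theta>' v"
proof -
  have "normalize_reserves n \<theta> = normalize_reserves n \<theta>'"
  proof (cases "s = 1")
    case True
    then show ?thesis using normalize_reserves_eq_single_level \<theta> \<theta>' n m same by blast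
  next
    case False
    then have "Gamma_twins n s m \<theta> \<theta>'" using \<theta> \<theta>' n m s same unfolding Gamma_twins_def by simp
    then show ?thesis by (rule Gamma_twins.normalize_reserves_eq)
  qed
  then show ?thesis
    using Rev_normalize_reserves[OF \<theta> v s] Rev_normalize_reserves[OF \<theta>' v s] by simp
qed

section \<open>Be the leader\<close>

lemma sum_atLeastLessThan_Suc_1:
  fixes g :: "nat \<Rightarrow> real"
  shows "1 \<le> k \<Longrightarrow> (\<Sum>t\<in>{1..<Suc k}. g t) = (\<Sum>t\<in>{1..<k}. g t) + g k"
  by (simp add: sum.atLeastLessThan_Suc)

lemma sum_atLeastAtMost_1_split_last:
  fixes g :: "nat \<Rightarrow> real"
  shows "1 \<le> T \<Longrightarrow> (\<Sum>t=1..T. g t) = (\<Sum>t\<in>{1..<T}. g t) + g T"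
  using sum_atLeastLessThan_Suc_1[of T g] by (simp add: atLeastLessThanSuc_atLeastAtMost)

context
  fixes f :: "'a \<Rightarrow> nat \<Rightarrow> real" and P :: "'a \<Rightarrow> real" and x :: "nat \<Rightarrow> 'a"
    and S :: "'a set" and T :: nat and e :: real
  assumes leader: "\<forall>t\<in>{1..T}. x t \<in> S \<and> (\<forall>\<theta>\<in>S.
      (\<Sum>\<tau>\<in>{1..<t}. f (x t) \<tau>) + P (x t) \<ge> (\<Sum>\<tau>\<in>{1..<t}. f \<theta> \<tau>) + P \<theta> - e)"
begin

text \<open>Playing tomorrow's leader today loses at most \<open>e\<close> per round against the perturbed leader.\<close>
lemma shifted_play_ge_leader:
  assumes "1 \<le> k" and "k \<le> T"
  shows "(\<Sum>t\<in>{1..<k}. f (x (Suc t)) t) + P (x 1)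
     \<ge> (\<Sum>\<tau>\<in>{1..<k}. f (x k) \<tau>) + P (x k) - (real k - 1) * e"
  using assms
proof (induction k rule: nat_induct_at_least)
  case base
  then show ?case by simp
next
  case (Suc k)
  have "k \<in> {1..T}" "Suc k \<in> {1..T}" using Suc by auto
  then have "(\<Sum>\<tau>\<in>{1..<k}. f (x k) \<tau>) + P (x k) \<ge> (\<Sum>\<tau>\<in>{1..<k}. f (x (Suc k)) \<tau>) + P (x (Suc k)) - e"
    using leader by blast
  moreover have "(real (Suc k) - 1) * e = (real k - 1) * e + e" by (simp add: algebra_simps)
  ultimately show ?case
    using Suc sum_atLeastLessThan_Suc_1[of k "\<lambda>t. f (x (Suc t)) t"]
      sum_atLeastLessThan_Suc_1[of k "f (x (Suc k))"]
    by linarith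
qed

lemma be_the_leader:
  assumes T: "1 \<le> T" and \<theta>: "\<theta> \<in> S"
  shows "(\<Sum>t=1..T. f \<theta> t) - (\<Sum>t=1..T. f (x t) t)
    \<le> (\<Sum>t\<in>{1..<T}. f (x (Suc t)) t - f (x t) t) + (f \<theta> T - f (x T) T) + (P (x 1) - P \<theta>) + real T * e"
proof -
  have "(\<Sum>\<tau>\<in>{1..<T}. f (x T) \<tau>) + P (x T) \<ge> (\<Sum>\<tau>\<in>{1..<T}. f \<theta> \<tau>) + P \<theta> - e"
    using leader T \<theta> by auto
  moreover have "(real T - 1) * e + e = real T * e" by (simp add: algebra_simps)
  ultimately show ?thesis
    using shifted_play_ge_leader[OF T order_refl]
      sum_atLeastAtMost_1_split_last[OF T, of "f \<theta>"] sum_atLeastAtMost_1_split_last[OF T, of "\<lambda>t. f (x t) t"]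
      sum_subtractf[of "\<lambda>t. f (x (Suc t)) t" "\<lambda>t. f (x t) t" "{1..<T}"]
    by linarith
qed

end

section \<open>Stability of the perturbed leader\<close>

lemma Max_gap_if_leaders_split:
  fixes G f \<gamma> :: "'a \<Rightarrow> real"
  assumes fin: "finite S" and x: "xt \<in> S" "xs \<in> S"
    and xt: "\<forall>\<theta>\<in>S. G xt \<ge> G \<theta> - e" and xs: "\<forall>\<theta>\<in>S. G xs + f xs \<ge> G \<theta> + f \<theta> - e"
    and f: "\<forall>\<theta>\<in>S. 0 \<le> f \<theta> \<and> f \<theta> \<le> 1" and split: "\<gamma> xt < c \<longleftrightarrow> c \<le> \<gamma> xs"
  shows "\<bar>Max (G ` {\<theta>\<in>S. c \<le> \<gamma> \<theta>}) - Max (G ` {\<theta>\<in>S. \<gamma> \<theta> < c})\<bar> \<le> 1 + e"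
proof -
  let ?H = "{\<theta>\<in>S. c \<le> \<gamma> \<theta>}" and ?L = "{\<theta>\<in>S. \<gamma> \<theta> < c}"
  have sides: "(xt \<in> ?L \<and> xs \<in> ?H) \<or> (xt \<in> ?H \<and> xs \<in> ?L)" using x split by auto
  then have "?H \<noteq> {}" "?L \<noteq> {}" by auto
  then have "Max (G ` ?H) \<in> G ` ?H" "Max (G ` ?L) \<in> G ` ?L" using fin by simp_all
  then obtain tH tL where tH: "Max (G ` ?H) = G tH" "tH \<in> ?H" and tL: "Max (G ` ?L) = G tL" "tL \<in> ?L"
    by (elim imageE)
  have le: "G \<theta> \<le> Max (G ` ?H)" if "\<theta> \<in> ?H" for \<theta> using fin that by simp
  have le': "G \<theta> \<le> Max (G ` ?L)" if "\<theta> \<in> ?L" for \<theta> using fin that by simp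
  from sides show ?thesis
  proof
    assume "xt \<in> ?L \<and> xs \<in> ?H"
    then show ?thesis using xt[rule_format, of tH] xs[rule_format, of tL] f[rule_format, of tL]
        f[rule_format, of xs] tH tL le[of xs] le'[of xt]
      unfolding abs_le_iff by auto
  next
    assume "xt \<in> ?H \<and> xs \<in> ?L"
    then show ?thesis using xt[rule_format, of tL] xs[rule_format, of tH] f[rule_format, of tH]
        f[rule_format, of xs] tH tL le[of xt] le'[of xs]
      unfolding abs_le_iff by auto
  qed
qed

text \<open>Raising the weight \<open>y\<close> of \<open>\<gamma>\<close> favours \<open>S\<^sub>H\<close>, where \<open>\<gamma>\<close> is at least \<open>\<delta>\<close> larger than on \<open>S\<^sub>L\<close>.\<close>
lemma Max_gap_slope:
  fixes B \<gamma> :: "'a \<Rightarrow> real"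
  assumes fin: "finite SH" "SH \<noteq> {}" "finite SL" "SL \<noteq> {}"
    and gH: "\<forall>\<theta>\<in>SH. c \<le> \<gamma> \<theta>" and gL: "\<forall>\<theta>\<in>SL. \<gamma> \<theta> \<le> c - \<delta>" and y: "y \<le> y'"
  shows "(y' - y) * \<delta> \<le> (Max ((\<lambda>\<theta>. B \<theta> + y' * \<gamma> \<theta>) ` SH) - Max ((\<lambda>\<theta>. B \<theta> + y' * \<gamma> \<theta>) ` SL))
       - (Max ((\<lambda>\<theta>. B \<theta> + y * \<gamma> \<theta>) ` SH) - Max ((\<lambda>\<theta>. B \<theta> + y * \<gamma> \<theta>) ` SL))"
proof -
  let ?g = "\<lambda>y \<theta>. B \<theta> + y * \<gamma> \<theta>"
  have "Max (?g y ` SH) \<in> ?g y ` SH" "Max (?g y' ` SL) \<in> ?g y' ` SL" using fin by simp_all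
  then obtain tH tL where tH: "Max (?g y ` SH) = ?g y tH" "tH \<in> SH"
    and tL: "Max (?g y' ` SL) = ?g y' tL" "tL \<in> SL"
    by (elim imageE)
  have "?g y' tH \<le> Max (?g y' ` SH)" "?g y tL \<le> Max (?g y ` SL)" using fin tH tL by simp_all
  moreover have "(y' - y) * c \<le> (y' - y) * \<gamma> tH" "(y' - y) * \<gamma> tL \<le> (y' - y) * (c - \<delta>)"
    using gH gL tH tL y by (simp_all add: mult_left_mono)
  ultimately show ?thesis using tH tL by (simp add: algebra_simps)
qed

lemma leader_switch_window:
  fixes B \<gamma> f :: "'a \<Rightarrow> real"
  assumes fin: "finite S" and gap: "\<forall>\<theta>\<in>S. \<gamma> \<theta> < c \<longrightarrow> \<gamma> \<theta> \<le> c - \<delta>"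
    and f: "\<forall>\<theta>\<in>S. 0 \<le> f \<theta> \<and> f \<theta> \<le> 1"
    and switch: "\<And>y. y \<in> {y1, y2} \<Longrightarrow> \<exists>xt\<in>S. \<exists>xs\<in>S.
        (\<forall>\<theta>\<in>S. B xt + y * \<gamma> xt \<ge> B \<theta> + y * \<gamma> \<theta> - e)
      \<and> (\<forall>\<theta>\<in>S. B xs + y * \<gamma> xs + f xs \<ge> B \<theta> + y * \<gamma> \<theta> + f \<theta> - e)
      \<and> (\<gamma> xt < c \<longleftrightarrow> c \<le> \<gamma> xs)"
  shows "\<bar>y1 - y2\<bar> * \<delta> \<le> 2 + 2 * e"
proof -
  let ?H = "{\<theta>\<in>S. c \<le> \<gamma> \<theta>}" and ?L = "{\<theta>\<in>S. \<gamma> \<theta> < c}"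
  define D where "D y = Max ((\<lambda>\<theta>. B \<theta> + y * \<gamma> \<theta>) ` ?H) - Max ((\<lambda>\<theta>. B \<theta> + y * \<gamma> \<theta>) ` ?L)" for y
  have D: "\<bar>D y\<bar> \<le> 1 + e" if "y \<in> {y1, y2}" for y
    using switch[OF that] f unfolding D_def by (blast intro: Max_gap_if_leaders_split[OF fin])
  obtain xt xs where "xt \<in> S" "xs \<in> S" "\<gamma> xt < c \<longleftrightarrow> c \<le> \<gamma> xs" using switch[of y1] by blast
  then have ne: "?H \<noteq> {}" "?L \<noteq> {}" by (cases "\<gamma> xt < c"; auto)+
  have window: "(y' - y) * \<delta> \<le> 2 + 2 * e" if y: "y \<le> y'" "y \<in> {y1, y2}" "y' \<in> {y1, y2}" for y y'
  proof -
    have "(y' - y) * \<delta> \<le> D y' - D y"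
      unfolding D_def by (rule Max_gap_slope) (use fin ne gap y(1) in auto)
    also have "\<dots> \<le> 2 + 2 * e" using D[OF y(2)] D[OF y(3)] unfolding abs_le_iff by linarith
    finally show ?thesis .
  qed
  show ?thesis
  proof (cases "y1 \<le> y2")
    case True
    then show ?thesis using window[of y1 y2] by (simp add: abs_of_nonpos)
  next
    case False
    then show ?thesis using window[of y2 y1] by (simp add: abs_of_nonneg)
  qed
qed

section \<open>Uniform perturbations\<close>

abbreviation uniform_interval :: "real \<Rightarrow> real measure" where
  "uniform_interval a \<equiv> uniform_measure lborel {0..a}"

lemma prob_space_uniform_interval: "0 < a \<Longrightarrow> prob_space (uniform_interval a)"
  by (rule prob_space_uniform_measure) auto

lemma AE_PiM_uniform_interval:
  assumes V: "finite V" and a: "0 < a"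
  shows "AE \<alpha> in PiM V (\<lambda>_. uniform_interval a). \<forall>w\<in>V. \<alpha> w \<in> {0..a}"
proof (rule eventually_ball_finite[OF V], intro ballI)
  fix w assume "w \<in> V"
  have "AE y in uniform_interval a. y \<in> {0..a}" by (rule AE_uniform_measureI) auto
  show "AE \<alpha> in PiM V (\<lambda>_. uniform_interval a). \<alpha> w \<in> {0..a}"
    by (rule AE_PiM_component[where P = "\<lambda>y. y \<in> {0..a}"])
      (use prob_space_uniform_interval[OF a] \<open>w \<in> V\<close> \<open>AE y in uniform_interval a. y \<in> {0..a}\<close> in auto)
qed

lemma emeasure_uniform_interval_le:
  assumes a: "0 < a" and L: "0 \<le> L"
  shows "emeasure (uniform_interval a) {y - L..y + L} \<le> ennreal (2 * L / a)"
proof -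
  have "emeasure (uniform_interval a) {y - L..y + L}
      = emeasure lborel ({0..a} \<inter> {y - L..y + L}) / emeasure lborel {0..a}"
    by (rule emeasure_uniform_measure) auto
  also have "\<dots> \<le> emeasure lborel {y - L..y + L} / emeasure lborel {0..a}"
    by (intro divide_right_mono_ennreal emeasure_mono) auto
  also have "\<dots> = ennreal (2 * L / a)" using L a by (simp add: divide_ennreal)
  finally show ?thesis .
qed

text \<open>Fubini along coordinate \<open>w\<close>: every section of \<open>E\<close> lies in an interval of length \<open>2L\<close>.\<close>
lemma emeasure_PiM_uniform_thin_le:
  assumes V: "finite V" and w: "w \<in> V" and a: "0 < a" and L: "0 \<le> L"
    and E: "E \<in> sets (PiM V (\<lambda>_. uniform_interval a))"
    and thin: "\<And>x y y'. x(w := y) \<in> E \<Longrightarrow> x(w := y') \<in> E \<Longrightarrow> \<bar>y - y'\<bar> \<le> L"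
  shows "emeasure (PiM V (\<lambda>_. uniform_interval a)) E \<le> ennreal (2 * L / a)"
proof -
  interpret P: product_prob_space "\<lambda>_. uniform_interval a"
    by (rule product_prob_spaceI) (rule prob_space_uniform_interval[OF a])
  define I where "I = V - {w}"
  have VI: "V = insert w I" "w \<notin> I" "finite I" using w V unfolding I_def by auto
  interpret Q: prob_space "PiM I (\<lambda>_. uniform_interval a)"
    by (rule prob_space_PiM) (rule prob_space_uniform_interval[OF a])
  have slice: "(\<integral>\<^sup>+ y. indicator E (x(w := y)) \<partial>uniform_interval a) \<le> ennreal (2 * L / a)" for x
  proof (cases "\<exists>y'. x(w := y') \<in> E")
    case True
    then obtain y' where y': "x(w := y') \<in> E" by blast
    have "(\<integral>\<^sup>+ y. indicator E (x(w := y)) \<partial>uniform_interval a)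
        \<le> (\<integral>\<^sup>+ y. indicator {y' - L..y' + L} y \<partial>uniform_interval a)"
      by (intro nn_integral_mono) (auto simp: indicator_def abs_le_iff dest: thin[OF _ y'])
    also have "\<dots> = emeasure (uniform_interval a) {y' - L..y' + L}"
      by (subst nn_integral_indicator) auto
    also have "\<dots> \<le> ennreal (2 * L / a)" by (rule emeasure_uniform_interval_le[OF a L])
    finally show ?thesis .
  qed (auto simp: indicator_def)
  have "emeasure (PiM V (\<lambda>_. uniform_interval a)) E
      = (\<integral>\<^sup>+ \<alpha>. indicator E \<alpha> \<partial>PiM V (\<lambda>_. uniform_interval a))"
    using E by simp
  also have "\<dots> = (\<integral>\<^sup>+ x. (\<integral>\<^sup>+ y. indicator E (x(w := y)) \<partial>uniform_interval a) \<partial>PiM I (\<lambda>_. uniform_interval a))"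
    unfolding VI(1) by (rule P.product_nn_integral_insert[OF VI(3) VI(2)]) (use E VI in simp)
  also have "\<dots> \<le> (\<integral>\<^sup>+ x. ennreal (2 * L / a) \<partial>PiM I (\<lambda>_. uniform_interval a))"
    by (intro nn_integral_mono slice)
  also have "\<dots> = ennreal (2 * L / a)" by (simp add: Q.emeasure_space_1)
  finally show ?thesis .
qed

lemma pred_measurable_finite_range:
  assumes S: "finite S" and range: "\<forall>\<alpha>\<in>space M. f \<alpha> \<in> S \<and> g \<alpha> \<in> S"
    and f: "\<And>\<theta>. {\<alpha> \<in> space M. f \<alpha> = \<theta>} \<in> sets M" and g: "\<And>\<theta>. {\<alpha> \<in> space M. g \<alpha> = \<theta>} \<in> sets M"
  shows "{\<alpha> \<in> space M. Q (f \<alpha>) (g \<alpha>)} \<in> sets M"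
proof -
  have "{\<alpha> \<in> space M. Q (f \<alpha>) (g \<alpha>)}
      = (\<Union>p\<in>{p \<in> S \<times> S. Q (fst p) (snd p)}. {\<alpha> \<in> space M. f \<alpha> = fst p} \<inter> {\<alpha> \<in> space M. g \<alpha> = snd p})"
    using range by auto
  also have "\<dots> \<in> sets M" using S f g by (intro sets.finite_UN) auto
  finally show ?thesis .
qed

lemma perturb_upd:
  assumes w: "w \<in> VSL n m"
  shows "perturb n s m (\<alpha>(w := y)) \<theta> = perturb n s m \<alpha> \<theta> + (y - \<alpha> w) * Rev n s \<theta> w"
proof -
  have "perturb n s m (\<alpha>(w := y)) \<theta> = y * Rev n s \<theta> w + (\<Sum>u\<in>VSL n m - {w}. \<alpha> u * Rev n s \<theta> u)"
    unfolding perturb_def by (subst sum.remove[OF finite_VSL w]) (auto intro!: sum.cong)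
  moreover have "perturb n s m \<alpha> \<theta> = \<alpha> w * Rev n s \<theta> w + (\<Sum>u\<in>VSL n m - {w}. \<alpha> u * Rev n s \<theta> u)"
    unfolding perturb_def by (rule sum.remove[OF finite_VSL w])
  ultimately show ?thesis by (simp add: algebra_simps)
qed

lemma perturb_bounds:
  assumes \<theta>: "\<theta> \<in> S_sm n s m" and \<alpha>: "\<forall>u\<in>VSL n m. \<alpha> u \<in> {0..a}"
  shows "0 \<le> perturb n s m \<alpha> \<theta> \<and> perturb n s m \<alpha> \<theta> \<le> real (card (VSL n m)) * a"
proof -
  have summand: "0 \<le> \<alpha> u * Rev n s \<theta> u \<and> \<alpha> u * Rev n s \<theta> u \<le> a" if "u \<in> VSL n m" for u
    using Rev_bounds[OF \<theta>, of u] \<alpha> that mult_left_mono[of "Rev n s \<theta> u" 1 "\<alpha> u"] by auto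
  have "0 \<le> perturb n s m \<alpha> \<theta>" unfolding perturb_def using summand by (simp add: sum_nonneg)
  moreover have "perturb n s m \<alpha> \<theta> \<le> (\<Sum>u\<in>VSL n m. a)" unfolding perturb_def using summand by (intro sum_mono) auto
  ultimately show ?thesis by simp
qed

section \<open>Regret of Generalized FTPL, pointwise\<close>

definition ftpl_objective :: "nat \<Rightarrow> nat \<Rightarrow> nat \<Rightarrow> (nat \<Rightarrow> nat \<Rightarrow> real) \<Rightarrow> ((nat \<Rightarrow> real) \<Rightarrow> real)
    \<Rightarrow> nat \<Rightarrow> (nat \<Rightarrow> nat \<Rightarrow> real) \<Rightarrow> real" where
  "ftpl_objective n s m v \<alpha> t \<theta> = (\<Sum>\<tau>\<in>{1..<t}. Rev n s \<theta> (v \<tau>)) + perturb n s m \<alpha> \<theta>"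

lemma ftpl_play_leader:
  assumes "ftpl_play n s m T v play" and "\<alpha> \<in> space (ftpl_D n m T)" and "t \<in> {1..T}"
  shows "play \<alpha> t \<in> S_sm n s m"
    and "\<forall>\<theta>\<in>S_sm n s m. ftpl_objective n s m v \<alpha> t (play \<alpha> t) \<ge> ftpl_objective n s m v \<alpha> t \<theta> - ftpl_eps T"
  using assms unfolding ftpl_play_def ftpl_objective_def by blast+

lemma ftpl_objective_Suc:
  "1 \<le> t \<Longrightarrow> ftpl_objective n s m v \<alpha> (Suc t) \<theta> = ftpl_objective n s m v \<alpha> t \<theta> + Rev n s \<theta> (v t)"
  unfolding ftpl_objective_def by (simp add: sum_atLeastLessThan_Suc_1)

lemma ftpl_objective_upd:
  "w \<in> VSL n m \<Longrightarrow> \<alpha> w = 0 \<Longrightarrow>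
    ftpl_objective n s m v (\<alpha>(w := y)) t \<theta> = ftpl_objective n s m v \<alpha> t \<theta> + y * Rev n s \<theta> w"
  unfolding ftpl_objective_def using perturb_upd[of w n m s \<alpha> y \<theta>] by simp

text \<open>Column \<open>w\<close> of \<open>\<Gamma>\<^sup>S\<^sup>L\<close> crosses \<open>k/m\<close> between rounds \<open>t\<close> and \<open>t + 1\<close>: exactly one of its two
  values lies below \<open>k/m\<close>.\<close>
definition crossing :: "nat \<Rightarrow> nat \<Rightarrow> nat \<Rightarrow> nat \<Rightarrow> (((nat \<Rightarrow> real) \<Rightarrow> real) \<Rightarrow> nat \<Rightarrow> nat \<Rightarrow> nat \<Rightarrow> real)
    \<Rightarrow> nat \<Rightarrow> (nat \<Rightarrow> real) \<Rightarrow> nat \<Rightarrow> ((nat \<Rightarrow> real) \<Rightarrow> real) set" where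
  "crossing n s m T play t w k = {\<alpha> \<in> space (ftpl_D n m T).
     Rev n s (play \<alpha> t) w < real k / real m \<longleftrightarrow> real k / real m \<le> Rev n s (play \<alpha> (Suc t)) w}"

text \<open>If no column of \<open>\<Gamma>\<^sup>S\<^sup>L\<close> crosses a grid value, the two auctions have the same columns and hence
  the same revenue; otherwise the revenue changes by at most 1.\<close>
lemma Rev_change_le_crossings:
  assumes \<theta>1: "\<theta>1 \<in> S_sm n s m" and \<theta>2: "\<theta>2 \<in> S_sm n s m" and n: "2 \<le> n" and m: "1 \<le> m"
    and s: "1 \<le> s" and p: "\<forall>i<n. 0 \<le> p i"
  shows "Rev n s \<theta>2 p - Rev n s \<theta>1 p \<le> (\<Sum>(w, k)\<in>VSL n m \<times> {1..m}.
           of_bool (Rev n s \<theta>1 w < real k / real m \<longleftrightarrow> real k / real m \<le> Rev n s \<theta>2 w))"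
proof (cases "same_Gamma n s m \<theta>1 \<theta>2")
  case True
  then have "Rev n s \<theta>1 p = Rev n s \<theta>2 p" by (rule Rev_eq_if_same_Gamma[OF \<theta>1 \<theta>2 n m s _ p])
  then show ?thesis by (simp add: sum_nonneg split_beta)
next
  case False
  then obtain w where w: "w \<in> VSL n m" "Rev n s \<theta>1 w \<noteq> Rev n s \<theta>2 w"
    unfolding same_Gamma_def by blast
  obtain j1 j2 where j: "j1 \<le> m" "Rev n s \<theta>1 w = real j1 / real m" "j2 \<le> m" "Rev n s \<theta>2 w = real j2 / real m"
    using Rev_in_grid[OF \<theta>1, of w] Rev_in_grid[OF \<theta>2, of w] unfolding grid_def by auto
  define k where "k = max j1 j2"
  have "j1 \<noteq> j2" using w(2) j by auto
  then have k: "k \<in> {1..m}" unfolding k_def using j by auto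
  have "Rev n s \<theta>1 w < real k / real m \<longleftrightarrow> real k / real m \<le> Rev n s \<theta>2 w"
    using \<open>j1 \<noteq> j2\<close> m unfolding j k_def by (auto simp: divide_less_cancel divide_le_cancel max_def)
  then have "Rev n s \<theta>2 p - Rev n s \<theta>1 p
      \<le> of_bool (Rev n s \<theta>1 w < real k / real m \<longleftrightarrow> real k / real m \<le> Rev n s \<theta>2 w)"
    using Rev_bounds[OF \<theta>1, of p] Rev_bounds[OF \<theta>2, of p] by simp
  also have "\<dots> \<le> (\<Sum>(w, k)\<in>VSL n m \<times> {1..m}.
           of_bool (Rev n s \<theta>1 w < real k / real m \<longleftrightarrow> real k / real m \<le> Rev n s \<theta>2 w))"
    using member_le_sum[of "(w, k)" "VSL n m \<times> {1..m}"
        "\<lambda>(w, k). of_bool (Rev n s \<theta>1 w < real k / real m \<longleftrightarrow> real k / real m \<le> Rev n s \<theta>2 w) :: real"]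
      w(1) k finite_VSL by auto
  finally show ?thesis .
qed

lemma regret_le_crossings:
  assumes n: "2 \<le> n" and s: "1 \<le> s" and m: "1 \<le> m" and T: "1 \<le> T"
    and v: "\<forall>t\<in>{1..T}. \<forall>i<n. v t i \<in> {0..1}" and play: "ftpl_play n s m T v play"
    and \<alpha>: "\<alpha> \<in> space (ftpl_D n m T)" and box: "\<forall>u\<in>VSL n m. \<alpha> u \<in> {0..a}"
  shows "regret n s m T v (play \<alpha>)
    \<le> (\<Sum>(t, w, k)\<in>{1..<T} \<times> VSL n m \<times> {1..m}. indicator (crossing n s m T play t w k) \<alpha>)
     + 1 + real (card (VSL n m)) * a + real T * ftpl_eps T"
proof -
  let ?S = "S_sm n s m" and ?F = "\<lambda>\<theta>. \<Sum>t=1..T. Rev n s \<theta> (v t)"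
  have leader: "\<forall>t\<in>{1..T}. play \<alpha> t \<in> ?S \<and> (\<forall>\<theta>\<in>?S. (\<Sum>\<tau>\<in>{1..<t}. Rev n s (play \<alpha> t) (v \<tau>))
      + perturb n s m \<alpha> (play \<alpha> t) \<ge> (\<Sum>\<tau>\<in>{1..<t}. Rev n s \<theta> (v \<tau>)) + perturb n s m \<alpha> \<theta> - ftpl_eps T)"
    using play \<alpha> unfolding ftpl_play_def by blast
  then have first: "play \<alpha> 1 \<in> ?S" and last: "play \<alpha> T \<in> ?S" using T by auto
  have "Max (?F ` ?S) \<in> ?F ` ?S" using finite_S_sm first by (intro Max_in) auto
  then obtain \<theta> where \<theta>: "\<theta> \<in> ?S" "Max (?F ` ?S) = ?F \<theta>" by (elim imageE) simp
  have "regret n s m T v (play \<alpha>) = ?F \<theta> - (\<Sum>t=1..T. Rev n s (play \<alpha> t) (v t))"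
    unfolding regret_def \<theta>(2) ..
  also have "\<dots> \<le> (\<Sum>t\<in>{1..<T}. Rev n s (play \<alpha> (Suc t)) (v t) - Rev n s (play \<alpha> t) (v t))
     + (Rev n s \<theta> (v T) - Rev n s (play \<alpha> T) (v T)) + (perturb n s m \<alpha> (play \<alpha> 1) - perturb n s m \<alpha> \<theta>)
     + real T * ftpl_eps T"
    by (rule be_the_leader[OF leader T \<theta>(1)])
  also have "(\<Sum>t\<in>{1..<T}. Rev n s (play \<alpha> (Suc t)) (v t) - Rev n s (play \<alpha> t) (v t))
      \<le> (\<Sum>(t, w, k)\<in>{1..<T} \<times> VSL n m \<times> {1..m}. indicator (crossing n s m T play t w k) \<alpha>)"
  proof -
    have "Rev n s (play \<alpha> (Suc t)) (v t) - Rev n s (play \<alpha> t) (v t)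
        \<le> (\<Sum>(w, k)\<in>VSL n m \<times> {1..m}. indicator (crossing n s m T play t w k) \<alpha>)" if t: "t \<in> {1..<T}" for t
    proof -
      have "play \<alpha> t \<in> ?S" "play \<alpha> (Suc t) \<in> ?S" "\<forall>i<n. 0 \<le> v t i" using leader v t by auto
      from Rev_change_le_crossings[OF this(1,2) n m s this(3)] show ?thesis
        using \<alpha> by (simp add: crossing_def indicator_def split_beta)
    qed
    then show ?thesis by (subst sum.cartesian_product[symmetric]) (rule sum_mono)
  qed
  also have "Rev n s \<theta> (v T) - Rev n s (play \<alpha> T) (v T) \<le> 1"
    using Rev_bounds[OF \<theta>(1), of "v T"] Rev_bounds[OF last, of "v T"] by linarith
  also have "perturb n s m \<alpha> (play \<alpha> 1) - perturb n s m \<alpha> \<theta> \<le> real (card (VSL n m)) * a"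
    using perturb_bounds[OF first box] perturb_bounds[OF \<theta>(1) box] by linarith
  finally show ?thesis by simp
qed

section \<open>Probability of a crossing\<close>

lemma crossing_in_sets:
  assumes meas: "\<forall>t\<in>{1..T}. \<forall>\<theta>. {\<alpha> \<in> space (ftpl_D n m T). play \<alpha> t = \<theta>} \<in> sets (ftpl_D n m T)"
    and play: "ftpl_play n s m T v play" and t: "t \<in> {1..<T}"
  shows "crossing n s m T play t w k \<in> sets (ftpl_D n m T)"
  unfolding crossing_def
  by (rule pred_measurable_finite_range[OF finite_S_sm[of n s m], where f = "\<lambda>\<alpha>. play \<alpha> t"
        and g = "\<lambda>\<alpha>. play \<alpha> (Suc t)" and Q = "\<lambda>a b. Rev n s a w < real k / real m \<longleftrightarrow> real k / real m \<le> Rev n s b w"])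
    (use play meas t in \<open>auto simp: ftpl_play_def\<close>)

text \<open>Changing a single perturbation \<open>\<alpha> w\<close> moves the objective of \<open>\<theta>\<close> by a multiple of
  \<open>Rev \<theta> w \<in> grid m\<close>, so a crossing of \<open>k/m\<close> can only happen in a window of \<open>\<alpha> w\<close> of width
  \<open>m (2 + 2\<epsilon>)\<close>.\<close>
lemma crossing_thin:
  assumes m: "1 \<le> m" and play: "ftpl_play n s m T v play" and t: "t \<in> {1..<T}" and w: "w \<in> VSL n m"
    and y: "x(w := y1) \<in> crossing n s m T play t w k" "x(w := y2) \<in> crossing n s m T play t w k"
  shows "\<bar>y1 - y2\<bar> \<le> real m * (2 + 2 * ftpl_eps T)"
proof -
  define x0 where "x0 = x(w := 0)"
  have x0: "x0 w = 0" "x(w := y) = x0(w := y)" for y unfolding x0_def by simp_all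
  let ?B = "ftpl_objective n s m v x0 t"
  have "\<bar>y1 - y2\<bar> * (1 / real m) \<le> 2 + 2 * ftpl_eps T"
  proof (rule leader_switch_window[OF finite_S_sm, where B = ?B and \<gamma> = "\<lambda>\<theta>. Rev n s \<theta> w"
        and f = "\<lambda>\<theta>. Rev n s \<theta> (v t)" and c = "real k / real m"])
    show "\<forall>\<theta>\<in>S_sm n s m. Rev n s \<theta> w < real k / real m \<longrightarrow> Rev n s \<theta> w \<le> real k / real m - 1 / real m"
      using grid_less_imp_le_minus[OF Rev_in_grid m] by blast
    show "\<forall>\<theta>\<in>S_sm n s m. 0 \<le> Rev n s \<theta> (v t) \<and> Rev n s \<theta> (v t) \<le> 1" using Rev_bounds by blast
    fix y assume "y \<in> {y1, y2}"
    then have cross: "x(w := y) \<in> crossing n s m T play t w k" using y by auto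
    then have sp: "x(w := y) \<in> space (ftpl_D n m T)" unfolding crossing_def by simp
    have tt: "t \<in> {1..T}" "Suc t \<in> {1..T}" and t1: "1 \<le> t" using t by auto
    note leader = ftpl_play_leader[OF play sp]
    let ?xt = "play (x(w := y)) t" and ?xs = "play (x(w := y)) (Suc t)"
    show "\<exists>xt\<in>S_sm n s m. \<exists>xs\<in>S_sm n s m.
        (\<forall>\<theta>\<in>S_sm n s m. ?B xt + y * Rev n s xt w \<ge> ?B \<theta> + y * Rev n s \<theta> w - ftpl_eps T)
      \<and> (\<forall>\<theta>\<in>S_sm n s m. ?B xs + y * Rev n s xs w + Rev n s xs (v t)
          \<ge> ?B \<theta> + y * Rev n s \<theta> w + Rev n s \<theta> (v t) - ftpl_eps T)
      \<and> (Rev n s xt w < real k / real m \<longleftrightarrow> real k / real m \<le> Rev n s xs w)"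
    proof -
      have "\<forall>\<theta>\<in>S_sm n s m. ?B ?xt + y * Rev n s ?xt w \<ge> ?B \<theta> + y * Rev n s \<theta> w - ftpl_eps T"
        using leader(2)[OF tt(1)] unfolding x0(2) ftpl_objective_upd[where \<alpha> = x0, OF w x0(1)] .
      moreover have "\<forall>\<theta>\<in>S_sm n s m. ?B ?xs + y * Rev n s ?xs w + Rev n s ?xs (v t)
          \<ge> ?B \<theta> + y * Rev n s \<theta> w + Rev n s \<theta> (v t) - ftpl_eps T"
        using leader(2)[OF tt(2)]
        unfolding x0(2) ftpl_objective_Suc[OF t1] ftpl_objective_upd[where \<alpha> = x0, OF w x0(1)] .
      moreover have "Rev n s ?xt w < real k / real m \<longleftrightarrow> real k / real m \<le> Rev n s ?xs w"
        using cross unfolding crossing_def by simp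
      ultimately show ?thesis using leader(1)[OF tt(1)] leader(1)[OF tt(2)] by blast
    qed
  qed
  then show ?thesis using m by (simp add: field_simps)
qed

lemma ftpl_eps_bounds:
  assumes "1 \<le> T"
  shows "0 \<le> ftpl_eps T" "ftpl_eps T \<le> 1" "real T * ftpl_eps T = sqrt (real T)"
  using assms by (auto simp: ftpl_eps_def real_div_sqrt)

lemma ftpl_eta_bounds:
  assumes m: "1 \<le> m" and T: "1 \<le> T"
  shows "0 < ftpl_eta m T" "real T * ftpl_eta m T \<le> sqrt (real T) / real m"
    "1 / ftpl_eta m T \<le> 3 * real m * sqrt (real T)"
proof -
  define e where "e = ftpl_eps T"
  have e: "0 \<le> e" "e \<le> 1" using ftpl_eps_bounds[OF T] unfolding e_def by auto
  define d where "d = real m * ((1 + 2 * e) * real T * real (m + 1))"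
  have d: "0 < d" unfolding d_def using m T e by simp
  have \<eta>: "ftpl_eta m T = sqrt (1 / d)" unfolding ftpl_eta_def e_def[symmetric] d_def by simp
  show "0 < ftpl_eta m T" unfolding \<eta> using d by simp
  have "real m * real m * real T \<le> d"
  proof -
    have "real m \<le> (1 + 2 * e) * real (m + 1)" using e by (simp add: algebra_simps)
    then have "real m * (real m * real T) \<le> real m * (((1 + 2 * e) * real (m + 1)) * real T)"
      by (intro mult_left_mono mult_right_mono) auto
    then show ?thesis unfolding d_def by (simp add: algebra_simps)
  qed
  then have "real T * real T / d \<le> real T / (real m * real m)"
    using d m T by (simp add: field_simps)
  then have "sqrt (real T * real T / d) \<le> sqrt (real T / (real m * real m))" by simp
  then show "real T * ftpl_eta m T \<le> sqrt (real T) / real m"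
    unfolding \<eta> by (simp add: real_sqrt_divide real_sqrt_mult)
  have "d \<le> 9 * (real m * real m) * real T"
  proof -
    have "(1 + 2 * e) * real (m + 1) \<le> 3 * (2 * real m)" using e m by (intro mult_mono) auto
    then have "real m * ((1 + 2 * e) * real (m + 1)) * real T \<le> real m * (3 * (2 * real m)) * real T"
      by (intro mult_left_mono mult_right_mono) auto
    also have "\<dots> \<le> 9 * (real m * real m) * real T" by (simp add: mult_right_mono)
    finally show ?thesis unfolding d_def by (simp add: ac_simps)
  qed
  then have "sqrt d \<le> sqrt (9 * (real m * real m) * real T)" by simp
  then show "1 / ftpl_eta m T \<le> 3 * real m * sqrt (real T)"
    unfolding \<eta> by (simp add: real_sqrt_divide real_sqrt_mult)
qed

lemma prob_space_ftpl_D: "1 \<le> m \<Longrightarrow> 1 \<le> T \<Longrightarrow> prob_space (ftpl_D n m T)"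
  unfolding ftpl_D_def using ftpl_eta_bounds(1)[of m T]
  by (intro prob_space_PiM prob_space_uniform_interval) auto

lemma crossing_prob_le:
  assumes m: "1 \<le> m" and T: "1 \<le> T"
    and meas: "\<forall>t\<in>{1..T}. \<forall>\<theta>. {\<alpha> \<in> space (ftpl_D n m T). play \<alpha> t = \<theta>} \<in> sets (ftpl_D n m T)"
    and play: "ftpl_play n s m T v play" and t: "t \<in> {1..<T}" and w: "w \<in> VSL n m"
  shows "measure (ftpl_D n m T) (crossing n s m T play t w k)
    \<le> 2 * (real m * (2 + 2 * ftpl_eps T)) * ftpl_eta m T"
proof -
  interpret prob_space "ftpl_D n m T" by (rule prob_space_ftpl_D[OF m T])
  note \<eta> = ftpl_eta_bounds(1)[OF m T] and e = ftpl_eps_bounds(1)[OF T]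
  have "emeasure (ftpl_D n m T) (crossing n s m T play t w k)
      \<le> ennreal (2 * (real m * (2 + 2 * ftpl_eps T)) / (1 / ftpl_eta m T))"
    unfolding ftpl_D_def
    by (rule emeasure_PiM_uniform_thin_le[OF finite_VSL w])
      (use \<eta> e crossing_in_sets[OF meas play t] crossing_thin[OF m play t w] in \<open>auto simp: ftpl_D_def\<close>)
  then show ?thesis using \<eta> e by (simp add: emeasure_eq_measure ennreal_le_iff)
qed

section \<open>Expected regret\<close>

lemma card_VSL_le_2nm: "2 \<le> n \<Longrightarrow> 1 \<le> m \<Longrightarrow> real (card (VSL n m)) \<le> 2 * real n * real m"
proof -
  assume n: "2 \<le> n" and m: "1 \<le> m"
  have "(n - 1) * (m + 1) + 1 \<le> n * (m + 1)" using n by (cases n) auto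
  also have "\<dots> \<le> 2 * n * m" using m by (simp add: algebra_simps)
  finally have "card (VSL n m) \<le> 2 * n * m" using card_VSL_le[of n m] by linarith
  then show ?thesis by (metis of_nat_le_iff of_nat_mult of_nat_numeral)
qed

lemma (in prob_space) integral_le_sum_indicator:
  fixes g :: "'a \<Rightarrow> real"
  assumes I: "finite I" and A: "\<And>i. i \<in> I \<Longrightarrow> A i \<in> events" and b: "\<And>i. i \<in> I \<Longrightarrow> prob (A i) \<le> b"
    and C: "0 \<le> C" and g: "AE x in M. g x \<le> (\<Sum>i\<in>I. indicator (A i) x) + C"
  shows "(\<integral>x. g x \<partial>M) \<le> real (card I) * b + C"
proof -
  have "integrable M (\<lambda>x. indicator (A i) x :: real)" if "i \<in> I" for i
    using A[OF that] by (intro integrable_real_indicator) (auto simp: less_top[symmetric])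
  then have int: "integrable M (\<lambda>x. \<Sum>i\<in>I. indicator (A i) x :: real)"
    by (intro Bochner_Integration.integrable_sum)
  have "(\<integral>x. g x \<partial>M) \<le> (\<integral>x. (\<Sum>i\<in>I. indicator (A i) x) + C \<partial>M)"
  proof (rule integral_mono_AE'[OF Bochner_Integration.integrable_add[OF int integrable_const] g])
    show "AE x in M. 0 \<le> (\<Sum>i\<in>I. indicator (A i) x) + C" using C by (intro AE_I2 add_nonneg_nonneg sum_nonneg) auto
  qed
  also have "\<dots> = (\<integral>x. (\<Sum>i\<in>I. indicator (A i) x) \<partial>M) + C"
    by (subst Bochner_Integration.integral_add[OF int integrable_const]) (simp add: prob_space)
  also have "(\<integral>x. (\<Sum>i\<in>I. indicator (A i) x :: real) \<partial>M) = (\<Sum>i\<in>I. \<integral>x. indicator (A i) x \<partial>M)"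
    by (intro Bochner_Integration.integral_sum)
      (use A in \<open>auto intro!: integrable_real_indicator simp: less_top[symmetric]\<close>)
  also have "\<dots> = (\<Sum>i\<in>I. prob (A i))"
    using A by (intro sum.cong refl) (simp add: Int_absorb1[OF sets.sets_into_space])
  also have "\<dots> \<le> real (card I) * b" using sum_bounded_above[of I "\<lambda>i. prob (A i)" b] b by simp
  finally show ?thesis by simp
qed

lemma regret_budget_le:
  fixes n m T :: nat and e \<eta> a cV :: real
  assumes n: "2 \<le> n" and m: "1 \<le> m" and T: "1 \<le> T"
    and e: "0 \<le> e" "e \<le> 1" "real T * e = sqrt (real T)"
    and \<eta>: "0 < \<eta>" "real T * \<eta> \<le> sqrt (real T) / real m"
    and a: "a \<le> 3 * real m * sqrt (real T)" and cV: "0 \<le> cV" "cV \<le> 2 * real n * real m"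
  shows "real (T - 1) * cV * real m * (2 * (real m * (2 + 2 * e)) * \<eta>) + 1 + cV * a + real T * e
     \<le> 24 * real n * (real m)\<^sup>2 * sqrt (real T)"
proof -
  let ?r = "sqrt (real T)"
  have r: "1 \<le> ?r" using T by simp
  have "1 * (1 * 1) \<le> real n * (real m * real m)" using n m by (intro mult_mono) auto
  then have nm: "1 \<le> real n * (real m)\<^sup>2" by (simp add: power2_eq_square)
  have "real (T - 1) * cV * real m * (2 * (real m * (2 + 2 * e)) * \<eta>)
      \<le> real T * cV * real m * (2 * (real m * 4) * \<eta>)"
    using e cV \<eta> by (intro mult_mono) auto
  also have "\<dots> = 8 * cV * real m * (real m * (real T * \<eta>))" by (simp add: algebra_simps)
  also have "\<dots> \<le> 8 * cV * real m * (real m * (?r / real m))"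
    using \<eta> cV by (intro mult_left_mono) auto
  also have "\<dots> = 8 * cV * real m * ?r" using m by simp
  also have "\<dots> \<le> 8 * (2 * real n * real m) * real m * ?r"
    using cV by (intro mult_right_mono) (auto simp: ac_simps)
  finally have first: "real (T - 1) * cV * real m * (2 * (real m * (2 + 2 * e)) * \<eta>)
      \<le> 16 * real n * (real m)\<^sup>2 * ?r" by (simp add: power2_eq_square algebra_simps)
  have "cV * a \<le> cV * (3 * real m * ?r)" using a cV by (intro mult_left_mono) auto
  also have "\<dots> \<le> (2 * real n * real m) * (3 * real m * ?r)" using cV by (intro mult_right_mono) auto
  finally have second: "cV * a \<le> 6 * real n * (real m)\<^sup>2 * ?r" by (simp add: power2_eq_square algebra_simps)
  have "?r \<le> real n * (real m)\<^sup>2 * ?r" "1 \<le> real n * (real m)\<^sup>2 * ?r"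
    using nm r mult_mono[OF nm r] by auto
  then show ?thesis using first second e(3) by linarith
qed

lemma card_crossing_index:
  "real (card ({1..<T} \<times> VSL n m \<times> {1..m})) = real (T - 1) * real (card (VSL n m)) * real m"
proof -
  have "card ({1..<T} \<times> VSL n m \<times> {1..m}) = (T - 1) * (card (VSL n m) * m)"
    by (simp add: card_cartesian_product)
  then show ?thesis by (simp only: of_nat_mult mult.assoc)
qed

lemma expected_regret_le:
  assumes n: "2 \<le> n" and s: "1 \<le> s" and m: "1 \<le> m" and T: "1 \<le> T"
    and v: "\<forall>t\<in>{1..T}. \<forall>i<n. v t i \<in> {0..1}"
    and meas: "\<forall>t\<in>{1..T}. \<forall>\<theta>. {\<alpha> \<in> space (ftpl_D n m T). play \<alpha> t = \<theta>} \<in> sets (ftpl_D n m T)"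
    and play: "ftpl_play n s m T v play"
  shows "(\<integral>\<alpha>. regret n s m T v (play \<alpha>) \<partial>ftpl_D n m T) \<le> 24 * real n * (real m)\<^sup>2 * sqrt (real T)"
proof -
  interpret prob_space "ftpl_D n m T" by (rule prob_space_ftpl_D[OF m T])
  note \<eta> = ftpl_eta_bounds[OF m T] and e = ftpl_eps_bounds[OF T]
  define a where "a = 1 / ftpl_eta m T"
  define I where "I = {1..<T} \<times> VSL n m \<times> {1..m}"
  define A where "A = (\<lambda>(t, w, k). crossing n s m T play t w k)"
  define b where "b = 2 * (real m * (2 + 2 * ftpl_eps T)) * ftpl_eta m T"
  define C where "C = 1 + real (card (VSL n m)) * a + real T * ftpl_eps T"
  have "0 < 1 / ftpl_eta m T" using \<eta>(1) by simp
  have "finite I" unfolding I_def using finite_VSL by simp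
  moreover have "A i \<in> events" "prob (A i) \<le> b" if "i \<in> I" for i
  proof -
    obtain t w k where i: "i = (t, w, k)" "t \<in> {1..<T}" "w \<in> VSL n m" using \<open>i \<in> I\<close> unfolding I_def by auto
    show "A i \<in> events" unfolding i A_def by (simp add: crossing_in_sets[OF meas play i(2)])
    show "prob (A i) \<le> b" unfolding i A_def b_def by (simp add: crossing_prob_le[OF m T meas play i(2,3)])
  qed
  moreover have "0 \<le> C" unfolding C_def a_def using \<eta> e by simp
  moreover have "AE \<alpha> in ftpl_D n m T. regret n s m T v (play \<alpha>) \<le> (\<Sum>i\<in>I. indicator (A i) \<alpha>) + C"
    using AE_PiM_uniform_interval[OF finite_VSL[of n m] \<open>0 < 1 / ftpl_eta m T\<close>] AE_space
    unfolding ftpl_D_def[symmetric]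
  proof eventually_elim
    case (elim \<alpha>)
    then show ?case
      using regret_le_crossings[OF n s m T v play elim(2) elim(1)] unfolding A_def I_def C_def a_def
      by (simp add: split_beta)
  qed
  ultimately have "(\<integral>\<alpha>. regret n s m T v (play \<alpha>) \<partial>ftpl_D n m T) \<le> real (card I) * b + C"
    by (rule integral_le_sum_indicator)
  also have "real (card I) * b + C
      = real (T - 1) * real (card (VSL n m)) * real m * b + 1 + real (card (VSL n m)) * a + real T * ftpl_eps T"
    unfolding I_def C_def card_crossing_index by simp
  also have "\<dots> \<le> 24 * real n * (real m)\<^sup>2 * sqrt (real T)"
    unfolding b_def using \<eta>(3) unfolding a_def[symmetric]
    by (intro regret_budget_le[OF n m T e \<eta>(1,2) _ _ card_VSL_le_2nm[OF n m]]) simp_all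
  finally show ?thesis .
qed

theorem theorem3p8:
  "\<exists>C::real. \<forall>(n::nat) (s::nat) (m::nat) (T::nat) (v::nat \<Rightarrow> nat \<Rightarrow> real)
      (play :: ((nat \<Rightarrow> real) \<Rightarrow> real) \<Rightarrow> nat \<Rightarrow> (nat \<Rightarrow> nat \<Rightarrow> real)).
     2 \<le> n \<longrightarrow> 1 \<le> s \<longrightarrow> 1 \<le> m \<longrightarrow> 1 \<le> T \<longrightarrow>
     (\<forall>t\<in>{1..T}. \<forall>i<n. v t i \<in> {0..1}) \<longrightarrow>
     (\<forall>t\<in>{1..T}. \<forall>\<theta>. {\<alpha> \<in> space (ftpl_D n m T). play \<alpha> t = \<theta>} \<in> sets (ftpl_D n m T)) \<longrightarrow>
     ftpl_play n s m T v play \<longrightarrow>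
     (\<integral>\<alpha>. regret n s m T v (play \<alpha>) \<partial>ftpl_D n m T) \<le> C * real n * (real m)\<^sup>2 * sqrt (real T)"
  by (intro exI[of _ 24] allI impI expected_regret_le)

end
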